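(* For every $q\ge2$, $\beta>0$, every odd integer $L$ and every finite $d$-dimensional cube $V\subset\mathbb{Z}^d$, $\lambda(\boldsymbol{I}_{\rm SW})\ge\lambda(\boldsymbol{I}_\mathcal{D})$.
   Context: Potts measure with free boundary on $G=(V,E)$: $\pi(\sigma)\propto\exp(\beta\,\#\{(u,v)\in E:\sigma(u)=\sigma(v)\})$; $p=1-e^{-\beta}$. Tilings: for $x\in\{0,\dots,L+2\}^d$, $C(x)$ is the union over $h\in\mathbb{Z}^d$ of the cubes $\{y:\|y-(x+(L+3)h)\|_\infty\le(L-1)/2\}$; $B_x=C(x)\cap V$, listed as $\mathcal{D}=\{B_1,\dots,B_m\}$, $m=(L+3)^d$. Isolated vertices dynamics $\boldsymbol{I}_{\rm SW}$: from $\sigma_t$, include each edge with equal endpoint spins independently with probability $p$ to get $A_t$; give each isolated vertex of $(V,A_t)$ an independent uniform spin in $\{1,\dots,q\}$; discard edges. Isolated vertices tiled dynamics $\boldsymbol{I}_\mathcal{D}$: same first step; then pick $k\in\{1,\dots,m\}$ uniformly and give an independent uniform spin only to each isolated vertex of $(V,A_t)$ lying in $B_k$; discard edges. $\lambda(P)=1-\max\{|\lambda_2|,|\lambda_N|\}$ for reversible $P$. *)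

theory Defs
  imports "HOL-Library.FuncSet" "Jordan_Normal_Form.Char_Poly"
begin

(* Vertices of Z^d are integer lists of length d. *)

definition cube :: "nat \<Rightarrow> int list \<Rightarrow> nat \<Rightarrow> int list set" where
  "cube d c n = {x. length x = d \<and> (\<forall>i<d. c!i \<le> x!i \<and> x!i < c!i + int n)}"

definition edges :: "int list set \<Rightarrow> int list set set" where
  "edges V = {{u,v} | u v. u \<in> V \<and> v \<in> V \<and> length u = length v \<and>
                 (\<Sum>i<length u. \<bar>u!i - v!i\<bar>) = 1}"

definition tile :: "nat \<Rightarrow> nat \<Rightarrow> int list \<Rightarrow> int list set" where
  "tile d L x = {y. length y = d \<and> (\<exists>h::int list. length h = d \<and>
      (\<forall>i<d. \<bar>y!i - (x!i + (int L + 3) * h!i)\<bar> \<le> (int L - 1) div 2))}"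

definition tile_index :: "nat \<Rightarrow> nat \<Rightarrow> int list set" where
  "tile_index d L = {x. length x = d \<and> (\<forall>i<d. 0 \<le> x!i \<and> x!i \<le> int L + 2)}"

definition configs :: "int list set \<Rightarrow> nat \<Rightarrow> (int list \<Rightarrow> nat) set" where
  "configs V q = V \<rightarrow>\<^sub>E {1..q}"

definition mono_edges :: "int list set \<Rightarrow> (int list \<Rightarrow> nat) \<Rightarrow> int list set set" where
  "mono_edges V \<sigma> = {e \<in> edges V. \<exists>u v. e = {u,v} \<and> \<sigma> u = \<sigma> v}"

definition isolated :: "int list set \<Rightarrow> int list set set \<Rightarrow> int list set" where
  "isolated V A = {v \<in> V. \<forall>e\<in>A. v \<notin> e}"

(* probability that bond percolation with parameter p on F yields exactly A *)
definition perc :: "real \<Rightarrow> 'a set \<Rightarrow> 'a set \<Rightarrow> real" where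
  "perc p F A = p ^ card A * (1 - p) ^ (card F - card A)"

(* probability of moving from sigma to tau when the vertices of U get independent
   uniform spins in {1..q} and all other spins are kept *)
definition resample :: "int list set \<Rightarrow> nat \<Rightarrow> int list set \<Rightarrow> (int list \<Rightarrow> nat) \<Rightarrow> (int list \<Rightarrow> nat) \<Rightarrow> real" where
  "resample V q U \<sigma> \<tau> =
     (if \<tau> \<in> configs V q \<and> (\<forall>v\<in>V - U. \<tau> v = \<sigma> v) then 1 / real q ^ card U else 0)"

definition P_SW :: "real \<Rightarrow> nat \<Rightarrow> int list set \<Rightarrow> (int list \<Rightarrow> nat) \<Rightarrow> (int list \<Rightarrow> nat) \<Rightarrow> real" where
  "P_SW \<beta> q V \<sigma> \<tau> =
     (\<Sum>A\<in>Pow (mono_edges V \<sigma>). perc (1 - exp (-\<beta>)) (mono_edges V \<sigma>) A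
         * resample V q (isolated V A) \<sigma> \<tau>)"

(* I_D: isolated vertices tiled dynamics; choosing k uniform in {1..m} is choosing
   x uniform in {0..L+2}^d *)
definition P_D :: "real \<Rightarrow> nat \<Rightarrow> nat \<Rightarrow> nat \<Rightarrow> int list set \<Rightarrow> (int list \<Rightarrow> nat) \<Rightarrow> (int list \<Rightarrow> nat) \<Rightarrow> real" where
  "P_D \<beta> q d L V \<sigma> \<tau> =
     (1 / real (card (tile_index d L))) *
     (\<Sum>x\<in>tile_index d L. \<Sum>A\<in>Pow (mono_edges V \<sigma>).
         perc (1 - exp (-\<beta>)) (mono_edges V \<sigma>) A
         * resample V q (isolated V A \<inter> (tile d L x \<inter> V)) \<sigma> \<tau>)"

definition state_enum :: "'s set \<Rightarrow> nat \<Rightarrow> 's" where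
  "state_enum S = (SOME f. bij_betw f {..<card S} S)"

definition trans_mat :: "'s set \<Rightarrow> ('s \<Rightarrow> 's \<Rightarrow> real) \<Rightarrow> real mat" where
  "trans_mat S P = mat (card S) (card S) (\<lambda>(i,j). P (state_enum S i) (state_enum S j))"

(* eigenvalues 1 = lambda_1 >= lambda_2 >= ... >= lambda_N (real, as for reversible P),
   listed with multiplicity as the roots of the characteristic polynomial *)
definition eigen_list :: "real mat \<Rightarrow> real list" where
  "eigen_list M = (THE es. sorted_wrt (\<lambda>a b. a \<ge> b) es \<and>
                      char_poly M = prod_list (map (\<lambda>e. [:-e, 1:]) es))"

definition spectral_gap :: "real mat \<Rightarrow> real" where
  "spectral_gap M = (let es = eigen_list M in 1 - max \<bar>es ! 1\<bar> \<bar>last es\<bar>)"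

end

theory Submission
  imports Defs "Jordan_Normal_Form.Schur_Decomposition"
begin

text \<open>
  Write \<open>w(\<sigma>) = exp(\<beta> \<cdot> #monochromatic edges of \<sigma>)\<close>. Both chains are reversible with respect
  to \<open>w\<close>, and by the Edwards--Sokal coupling the kernel \<open>w(\<sigma>) P(\<sigma>,\<tau>)\<close> of either chain is a
  nonnegative mixture, over bond sets \<open>A\<close>, of kernels that resample the spins of a vertex set
  \<open>U(A)\<close> among the configurations compatible with \<open>A\<close>: \<open>U(A)\<close> is the set of isolated
  vertices for \<open>I\<^sub>S\<^sub>W\<close>, and its intersection with a random tile for \<open>I\<^sub>D\<close>.
  A resampling kernel is an orthogonal projection (a conditional expectation), and projections
  onto larger subspaces dominate those onto smaller ones (resampling fewer spins projects onto
  more functions), so the quadratic form \<open>\<langle>f, P f\<rangle>\<^sub>w\<close> of \<open>I\<^sub>S\<^sub>W\<close> is nonnegative and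
  dominated by that of \<open>I\<^sub>D\<close>. By the min--max principle the second
  eigenvalue of \<open>I\<^sub>S\<^sub>W\<close> is at most that of \<open>I\<^sub>D\<close>, and for positive semidefinite chains the
  spectral gap is one minus the second eigenvalue.
\<close>

section \<open>Coordinate linear algebra\<close>

text \<open>Vectors of \<open>\<real>\<^sup>N\<close> are functions \<open>nat \<Rightarrow> real\<close> of which only the coordinates below \<open>N\<close> matter.\<close>

definition dot :: "nat \<Rightarrow> (nat \<Rightarrow> real) \<Rightarrow> (nat \<Rightarrow> real) \<Rightarrow> real" where
  "dot N x y = (\<Sum>a<N. x a * y a)"

definition matvec :: "nat \<Rightarrow> (nat \<Rightarrow> nat \<Rightarrow> real) \<Rightarrow> (nat \<Rightarrow> real) \<Rightarrow> nat \<Rightarrow> real" where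
  "matvec N S x = (\<lambda>a. \<Sum>b<N. S a b * x b)"

definition in_span :: "nat \<Rightarrow> (nat \<Rightarrow> nat \<Rightarrow> real) \<Rightarrow> nat \<Rightarrow> (nat \<Rightarrow> real) \<Rightarrow> bool" where
  "in_span N v j x \<longleftrightarrow> (\<exists>c. \<forall>a<N. x a = (\<Sum>k<j. c k * v k a))"

lemma dot_cong:
  "(\<And>a. a < N \<Longrightarrow> x a = x' a) \<Longrightarrow> (\<And>a. a < N \<Longrightarrow> y a = y' a) \<Longrightarrow> dot N x y = dot N x' y'"
  unfolding dot_def by (rule sum.cong) auto

lemma dot_commute: "dot N x y = dot N y x"
  unfolding dot_def by (simp add: mult.commute)

lemma dot_self_nonneg: "dot N x x \<ge> 0"
  unfolding dot_def by (rule sum_nonneg) auto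

lemma dot_self_eq_0D: "dot N x x = 0 \<Longrightarrow> a < N \<Longrightarrow> x a = 0"
  unfolding dot_def using sum_nonneg_eq_0_iff[of "{..<N}" "\<lambda>a. x a * x a"] by auto

lemma dot_sum_left: "dot N (\<lambda>a. \<Sum>k<m. c k * v k a) y = (\<Sum>k<m. c k * dot N (v k) y)"
  unfolding dot_def by (simp add: sum_distrib_left sum_distrib_right mult.assoc sum.swap[of _ "{..<N}"])

lemma dot_diff_left: "dot N (\<lambda>a. x a - z a) y = dot N x y - dot N z y"
  unfolding dot_def by (simp add: left_diff_distrib sum_subtractf)

lemma dot_scale_left: "dot N (\<lambda>a. s * x a) y = s * dot N x y"
  unfolding dot_def by (simp add: sum_distrib_left mult.assoc)

lemma dot_scale_right: "dot N x (\<lambda>a. s * y a) = s * dot N x y"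
  unfolding dot_def by (simp add: sum_distrib_left mult_ac)

lemma dot_matvec_symmetric:
  assumes "\<And>a b. a < N \<Longrightarrow> b < N \<Longrightarrow> S a b = S b a"
  shows "dot N (matvec N S x) y = dot N x (matvec N S y)"
proof -
  have "dot N (matvec N S x) y = (\<Sum>a<N. \<Sum>b<N. S a b * x b * y a)"
    unfolding dot_def matvec_def by (simp add: sum_distrib_right)
  also have "\<dots> = (\<Sum>b<N. \<Sum>a<N. S a b * x b * y a)" by (rule sum.swap)
  also have "\<dots> = (\<Sum>b<N. \<Sum>a<N. x b * (S b a * y a))"
    by (intro sum.cong refl) (simp add: assms mult_ac)
  also have "\<dots> = dot N x (matvec N S y)"
    unfolding dot_def matvec_def by (simp add: sum_distrib_left)
  finally show ?thesis .
qed

lemma dot_orthogonal_sum: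
  assumes "\<And>k. k < (j::nat) \<Longrightarrow> k \<noteq> i \<Longrightarrow> dot N (q k) (q i) = 0" and "i < j"
  shows "(\<Sum>k<j. c k * dot N (q k) (q i)) = c i * dot N (q i) (q i)"
proof -
  have "(\<Sum>k<j. c k * dot N (q k) (q i)) = (\<Sum>k<j. if k = i then c i * dot N (q i) (q i) else 0)"
    by (intro sum.cong) (auto simp: assms)
  also have "\<dots> = c i * dot N (q i) (q i)" using assms(2) by (subst sum.delta) auto
  finally show ?thesis .
qed

lemma dot_orthogonal_expansion:
  assumes "\<And>i j. i < m \<Longrightarrow> j < m \<Longrightarrow> i \<noteq> j \<Longrightarrow> dot N (q i) (q j) = 0"
  shows "dot N (\<lambda>a. \<Sum>k<m. c k * q k a) (\<lambda>a. \<Sum>k<m. d k * q k a)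
       = (\<Sum>k<(m::nat). c k * d k * dot N (q k) (q k))"
proof -
  have "dot N (q k) (\<lambda>a. \<Sum>l<m. d l * q l a) = d k * dot N (q k) (q k)" if "k < m" for k
  proof -
    have "dot N (q k) (\<lambda>a. \<Sum>l<m. d l * q l a) = (\<Sum>l<m. d l * dot N (q l) (q k))"
      by (subst dot_commute) (rule dot_sum_left)
    also have "\<dots> = d k * dot N (q k) (q k)" by (rule dot_orthogonal_sum) (use that assms in auto)
    finally show ?thesis .
  qed
  then show ?thesis unfolding dot_sum_left by (simp add: mult.assoc)
qed

lemma matvec_sum: "matvec N S (\<lambda>a. \<Sum>k<m. c k * v k a) a = (\<Sum>k<m. c k * matvec N S (v k) a)"
  unfolding matvec_def by (simp add: sum_distrib_left sum.swap[of _ "{..<N}"] mult_ac)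

lemma matvec_diff: "matvec N S (\<lambda>a. x a - z a) a = matvec N S x a - matvec N S z a"
  unfolding matvec_def by (simp add: right_diff_distrib sum_subtractf)

lemma matvec_cong: "(\<And>a. a < N \<Longrightarrow> x a = x' a) \<Longrightarrow> matvec N S x = matvec N S x'"
  unfolding matvec_def by (intro ext sum.cong) auto

lemma in_span_cong: "in_span N v j x \<Longrightarrow> (\<And>a. a < N \<Longrightarrow> x a = y a) \<Longrightarrow> in_span N v j y"
  unfolding in_span_def by metis

lemma in_span_generator: "k < j \<Longrightarrow> in_span N v j (v k)"
  unfolding in_span_def
proof (rule exI[of _ "\<lambda>i. if i = k then 1 else 0"], intro allI impI)
  fix a assume "k < j"
  have "(\<Sum>i<j. (if i = k then 1 else 0) * v i a) = (\<Sum>i<j. if i = k then v i a else 0)"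
    by (intro sum.cong) auto
  also have "\<dots> = v k a" using \<open>k < j\<close> by (simp add: sum.delta')
  finally show "v k a = (\<Sum>i<j. (if i = k then 1 else 0) * v i a)" by simp
qed

lemma in_span_zero: "in_span N v j (\<lambda>a. 0)"
  unfolding in_span_def by (rule exI[of _ "\<lambda>i. 0"]) simp

lemma in_span_add: "in_span N v j x \<Longrightarrow> in_span N v j y \<Longrightarrow> in_span N v j (\<lambda>a. x a + y a)"
  unfolding in_span_def
proof (elim exE)
  fix c d assume c: "\<forall>a<N. x a = (\<Sum>k<j. c k * v k a)" and d: "\<forall>a<N. y a = (\<Sum>k<j. d k * v k a)"
  show "\<exists>e. \<forall>a<N. x a + y a = (\<Sum>k<j. e k * v k a)"
    by (rule exI[of _ "\<lambda>k. c k + d k"]) (simp add: c d distrib_right sum.distrib)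
qed

lemma in_span_scale: "in_span N v j x \<Longrightarrow> in_span N v j (\<lambda>a. s * x a)"
  unfolding in_span_def
proof (elim exE)
  fix c assume c: "\<forall>a<N. x a = (\<Sum>k<j. c k * v k a)"
  show "\<exists>e. \<forall>a<N. s * x a = (\<Sum>k<j. e k * v k a)"
    by (rule exI[of _ "\<lambda>k. s * c k"]) (simp add: c sum_distrib_left mult.assoc)
qed

lemma in_span_diff: "in_span N v j x \<Longrightarrow> in_span N v j y \<Longrightarrow> in_span N v j (\<lambda>a. x a - y a)"
  using in_span_add[of N v j x "\<lambda>a. (-1) * y a"] in_span_scale[of N v j y "-1"] by simp

lemma in_span_sum:
  "(\<And>i. i < (m::nat) \<Longrightarrow> in_span N v j (x i)) \<Longrightarrow> in_span N v j (\<lambda>a. \<Sum>i<m. b i * x i a)"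
proof (induction m)
  case 0 then show ?case by (simp add: in_span_zero)
next
  case (Suc m)
  have "in_span N v j (\<lambda>a. (\<Sum>i<m. b i * x i a) + b m * x m a)"
    using Suc by (intro in_span_add in_span_scale) auto
  then show ?case by simp
qed

lemma in_span_trans:
  assumes "\<And>k. k < j \<Longrightarrow> in_span N w j' (v k)" and "in_span N v j x"
  shows "in_span N w j' x"
proof -
  from assms(2) obtain c where c: "\<forall>a<N. x a = (\<Sum>k<j. c k * v k a)" unfolding in_span_def by blast
  have "in_span N w j' (\<lambda>a. \<Sum>k<j. c k * v k a)" by (rule in_span_sum) (rule assms(1))
  then show ?thesis by (rule in_span_cong) (simp add: c)
qed

lemma in_span_mono: "in_span N v j x \<Longrightarrow> j \<le> j' \<Longrightarrow> in_span N v j' x"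
  by (rule in_span_trans[of j N v j'], rule in_span_generator) auto

lemma in_span_generators_cong: "(\<And>k. k < j \<Longrightarrow> v k = w k) \<Longrightarrow> in_span N v j x \<Longrightarrow> in_span N w j x"
  unfolding in_span_def by (metis (no_types, lifting) lessThan_iff sum.cong)

lemma in_span_orthogonal_eq_0:
  assumes "in_span N q j z" and "\<And>k. k < j \<Longrightarrow> dot N z (q k) = 0" and "a < N"
  shows "z a = 0"
proof -
  from assms(1) obtain c where c: "\<forall>a<N. z a = (\<Sum>k<j. c k * q k a)" unfolding in_span_def by blast
  have "dot N z z = dot N (\<lambda>a. \<Sum>k<j. c k * q k a) z" by (rule dot_cong) (auto simp: c)
  also have "\<dots> = 0" unfolding dot_sum_left using assms(2) by (simp add: dot_commute)
  finally show ?thesis using dot_self_eq_0D assms(3) by blast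
qed

lemma gram_schmidt_residual_orthogonal:
  assumes orth: "\<And>k k'. k < (j::nat) \<Longrightarrow> k' < j \<Longrightarrow> k \<noteq> k' \<Longrightarrow> dot N (q k) (q k') = 0"
    and pos: "\<And>k. k < j \<Longrightarrow> dot N (q k) (q k) > 0" and i: "i < j"
  shows "dot N (\<lambda>a. x a - (\<Sum>k<j. dot N x (q k) / dot N (q k) (q k) * q k a)) (q i) = 0"
proof -
  have "(\<Sum>k<j. dot N x (q k) / dot N (q k) (q k) * dot N (q k) (q i))
      = dot N x (q i) / dot N (q i) (q i) * dot N (q i) (q i)"
    by (rule dot_orthogonal_sum[where c = "\<lambda>k. dot N x (q k) / dot N (q k) (q k)"]) (use orth i in auto)
  also have "\<dots> = dot N x (q i)" using pos[OF i] by simp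
  finally show ?thesis unfolding dot_diff_left dot_sum_left by simp
qed

lemma index_mult_mat_sum:
  assumes "A \<in> carrier_mat N N" "B \<in> carrier_mat N N" "i < N" "j < N"
  shows "(A * B) $$ (i, j) = (\<Sum>k<N. A $$ (i, k) * B $$ (k, j))"
  using assms by (simp add: scalar_prod_def atLeast0LessThan)

lemma in_span_columns_of_invertible:
  assumes P: "P \<in> carrier_mat N N" and Q: "Q \<in> carrier_mat N N" and PQ: "P * Q = 1\<^sub>m N"
  shows "in_span N (\<lambda>k a. P $$ (a, k)) N x"
  unfolding in_span_def
proof (rule exI[of _ "\<lambda>k. \<Sum>b<N. Q $$ (k, b) * x b"], intro allI impI)
  fix a assume a: "a < N"
  have "(\<Sum>b<N. (P * Q) $$ (a, b) * x b) = (\<Sum>b<N. if a = b then x b else 0)"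
    by (intro sum.cong) (auto simp: PQ a)
  then have "x a = (\<Sum>b<N. (P * Q) $$ (a, b) * x b)" using a by simp
  also have "\<dots> = (\<Sum>b<N. \<Sum>k<N. P $$ (a, k) * Q $$ (k, b) * x b)"
    using index_mult_mat_sum[OF P Q a] by (simp add: sum_distrib_right)
  also have "\<dots> = (\<Sum>k<N. (\<Sum>b<N. Q $$ (k, b) * x b) * P $$ (a, k))"
    by (subst sum.swap) (simp add: sum_distrib_left sum_distrib_right mult_ac)
  finally show "x a = (\<Sum>k<N. (\<Sum>b<N. Q $$ (k, b) * x b) * P $$ (a, k))" .
qed

section \<open>Spectral theorem for real symmetric matrices\<close>

text \<open>
  \<open>S\<close> is symmetric, and its action on the columns \<open>p j\<close> of an invertible matrix (with left
  inverse \<open>Qm\<close>) is upper triangular with diagonal \<open>e\<close>, as given by a Schur decomposition.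
  Gram--Schmidt applied to the \<open>p j\<close> then produces an orthogonal eigenbasis.
\<close>

locale triangularized =
  fixes N :: nat and S p B Qm :: "nat \<Rightarrow> nat \<Rightarrow> real" and e :: "nat \<Rightarrow> real"
  assumes symmetric: "\<And>a b. a < N \<Longrightarrow> b < N \<Longrightarrow> S a b = S b a"
    and triangular: "\<And>j a. j < N \<Longrightarrow> a < N \<Longrightarrow>
      matvec N S (p j) a = (\<Sum>k<j. B k j * p k a) + e j * p j a"
    and left_inverse: "\<And>i k. i < N \<Longrightarrow> k < N \<Longrightarrow> (\<Sum>a<N. Qm i a * p k a) = (if i = k then 1 else 0)"
begin

definition orth_eigen_prefix :: "nat \<Rightarrow> (nat \<Rightarrow> nat \<Rightarrow> real) \<Rightarrow> bool" where
  "orth_eigen_prefix j q \<longleftrightarrow>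
     (\<forall>i<j. dot N (q i) (q i) > 0 \<and> (\<forall>a<N. matvec N S (q i) a = e i * q i a))
     \<and> (\<forall>i<j. \<forall>i'<j. i \<noteq> i' \<longrightarrow> dot N (q i) (q i') = 0)
     \<and> (\<forall>i<j. in_span N p j (q i)) \<and> (\<forall>i<j. in_span N q j (p i))"

definition residual :: "nat \<Rightarrow> (nat \<Rightarrow> nat \<Rightarrow> real) \<Rightarrow> nat \<Rightarrow> real" where
  "residual j q = (\<lambda>a. p j a - (\<Sum>k<j. dot N (p j) (q k) / dot N (q k) (q k) * q k a))"

lemma column_not_in_span_of_previous:
  assumes j: "j < N"
  shows "\<not> in_span N p j (p j)"
proof
  assume "in_span N p j (p j)"
  then obtain c where c: "\<And>a. a < N \<Longrightarrow> p j a = (\<Sum>k<j. c k * p k a)" unfolding in_span_def by blast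
  have "1 = (\<Sum>a<N. Qm j a * p j a)" using left_inverse[OF j j] by simp
  also have "\<dots> = (\<Sum>a<N. Qm j a * (\<Sum>k<j. c k * p k a))" by (intro sum.cong) (auto simp: c)
  also have "\<dots> = (\<Sum>k<j. c k * (\<Sum>a<N. Qm j a * p k a))"
    by (simp add: sum_distrib_left sum.swap[of _ "{..<N}"] mult_ac)
  also have "\<dots> = 0" using left_inverse j by auto
  finally show False by simp
qed

lemma residual_orthogonal:
  assumes "orth_eigen_prefix j q" and "i < j"
  shows "dot N (residual j q) (q i) = 0"
  unfolding residual_def
  by (rule gram_schmidt_residual_orthogonal) (use assms in \<open>auto simp: orth_eigen_prefix_def\<close>)

lemma residual_nonzero:
  assumes q: "orth_eigen_prefix j q" and j: "j < N"
  shows "dot N (residual j q) (residual j q) > 0"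
proof (rule ccontr)
  assume "\<not> dot N (residual j q) (residual j q) > 0"
  with dot_self_nonneg[of N "residual j q"] have r0: "\<And>a. a < N \<Longrightarrow> residual j q a = 0"
    using dot_self_eq_0D by (metis order_less_le)
  have "in_span N q j (\<lambda>a. \<Sum>k<j. dot N (p j) (q k) / dot N (q k) (q k) * q k a)"
    by (rule in_span_sum) (rule in_span_generator)
  then have "in_span N q j (p j)" by (rule in_span_cong) (use r0 in \<open>auto simp: residual_def\<close>)
  moreover have "\<And>i. i < j \<Longrightarrow> in_span N p j (q i)" using q unfolding orth_eigen_prefix_def by auto
  ultimately have "in_span N p j (p j)" using in_span_trans[of j N p j q] by blast
  with column_not_in_span_of_previous[OF j] show False ..
qed

text \<open>
  \<open>S r - e\<^sub>j r\<close> lies in the span of the earlier eigenvectors by triangularity and is orthogonal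
  to each of them by symmetry, hence vanishes.
\<close>

lemma residual_eigen:
  assumes q: "orth_eigen_prefix j q" and j: "j < N" and a: "a < N"
  shows "matvec N S (residual j q) a = e j * residual j q a"
proof -
  from q have eig: "\<And>i a. i < j \<Longrightarrow> a < N \<Longrightarrow> matvec N S (q i) a = e i * q i a"
    and span: "\<And>i. i < j \<Longrightarrow> in_span N q j (p i)"
    unfolding orth_eigen_prefix_def by auto
  define \<alpha> where "\<alpha> k = dot N (p j) (q k) / dot N (q k) (q k)" for k
  let ?r = "residual j q"
  define z where "z = (\<lambda>a. matvec N S ?r a - e j * ?r a)"
  have z: "z a = (\<Sum>k<j. B k j * p k a) + (\<Sum>k<j. (e j * \<alpha> k - \<alpha> k * e k) * q k a)" if "a < N" for a
  proof -
    have "matvec N S ?r a = matvec N S (p j) a - (\<Sum>k<j. \<alpha> k * matvec N S (q k) a)"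
      unfolding residual_def matvec_diff matvec_sum \<alpha>_def ..
    also have "(\<Sum>k<j. \<alpha> k * matvec N S (q k) a) = (\<Sum>k<j. \<alpha> k * e k * q k a)"
      by (intro sum.cong) (auto simp: eig that)
    finally show ?thesis
      using triangular[OF j that] unfolding z_def residual_def \<alpha>_def[symmetric]
      by (simp add: algebra_simps sum_distrib_left sum_subtractf)
  qed
  have "in_span N q j (\<lambda>a. (\<Sum>k<j. B k j * p k a) + (\<Sum>k<j. (e j * \<alpha> k - \<alpha> k * e k) * q k a))"
    by (intro in_span_add in_span_sum in_span_generator span)
  then have z_span: "in_span N q j z" by (rule in_span_cong) (simp add: z)
  have z_orth: "dot N z (q i) = 0" if i: "i < j" for i
  proof -
    have "dot N (matvec N S ?r) (q i) = dot N ?r (matvec N S (q i))"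
      by (rule dot_matvec_symmetric) (rule symmetric)
    also have "\<dots> = dot N ?r (\<lambda>a. e i * q i a)" by (rule dot_cong) (auto simp: eig i)
    finally show ?thesis
      unfolding z_def dot_diff_left dot_scale_left dot_scale_right residual_orthogonal[OF q i] by simp
  qed
  have "z a = 0" by (rule in_span_orthogonal_eq_0[OF z_span z_orth a])
  then show ?thesis unfolding z_def by simp
qed

lemma orth_eigen_prefix_Suc:
  assumes q: "orth_eigen_prefix j q" and j: "j < N"
  shows "orth_eigen_prefix (Suc j) (q(j := residual j q))"
proof -
  let ?r = "residual j q" and ?q' = "q(j := residual j q)"
  from q have pos: "\<And>i. i < j \<Longrightarrow> dot N (q i) (q i) > 0"
    and eig: "\<And>i a. i < j \<Longrightarrow> a < N \<Longrightarrow> matvec N S (q i) a = e i * q i a"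
    and orth: "\<And>i i'. i < j \<Longrightarrow> i' < j \<Longrightarrow> i \<noteq> i' \<Longrightarrow> dot N (q i) (q i') = 0"
    and sp_p: "\<And>i. i < j \<Longrightarrow> in_span N p j (q i)"
    and sp_q: "\<And>i. i < j \<Longrightarrow> in_span N q j (p i)"
    unfolding orth_eigen_prefix_def by auto
  have r_orth: "\<And>i. i < j \<Longrightarrow> dot N ?r (q i) = 0" using residual_orthogonal[OF q] .
  have extend: "in_span N ?q' (Suc j) x" if "in_span N q j x" for x
    by (rule in_span_mono[OF in_span_generators_cong[of j q ?q', OF _ that]]) auto
  have "in_span N p (Suc j) ?r" unfolding residual_def
    by (intro in_span_diff in_span_generator in_span_sum in_span_mono[OF sp_p]) auto
  then have new_p: "in_span N p (Suc j) (?q' i)" if "i < Suc j" for i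
    using that in_span_mono[OF sp_p] by (cases "i = j") auto
  have r_span: "in_span N ?q' (Suc j) ?r" using in_span_generator[of j "Suc j" N ?q'] by simp
  have "in_span N ?q' (Suc j) (\<lambda>a. ?r a + (\<Sum>k<j. dot N (p j) (q k) / dot N (q k) (q k) * q k a))"
    by (rule in_span_add[OF r_span]) (intro extend in_span_sum in_span_generator)
  then have "in_span N ?q' (Suc j) (p j)" by (rule in_span_cong) (simp add: residual_def)
  then have new_q: "in_span N ?q' (Suc j) (p i)" if "i < Suc j" for i
    using that sp_q extend by (cases "i = j") auto
  show ?thesis unfolding orth_eigen_prefix_def
  proof (intro conjI allI impI)
    fix i assume "i < Suc j"
    then show "dot N (?q' i) (?q' i) > 0" and "\<And>a. a < N \<Longrightarrow> matvec N S (?q' i) a = e i * ?q' i a"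
      using pos residual_nonzero[OF q j] eig residual_eigen[OF q j] by (cases "i = j"; auto)+
  next
    fix i i' assume "i < Suc j" "i' < Suc j" "i \<noteq> i'"
    then show "dot N (?q' i) (?q' i') = 0"
      using orth r_orth by (cases "i = j"; cases "i' = j") (auto simp: dot_commute)
  qed (use new_p new_q in auto)
qed

lemma orth_eigen_prefix_exists: "j \<le> N \<Longrightarrow> \<exists>q. orth_eigen_prefix j q"
proof (induction j)
  case 0 show ?case by (simp add: orth_eigen_prefix_def)
next
  case (Suc j)
  then obtain q where "orth_eigen_prefix j q" by auto
  with orth_eigen_prefix_Suc Suc.prems show ?case by (metis Suc_le_eq)
qed

end

definition orth_eigenbasis ::
    "nat \<Rightarrow> (nat \<Rightarrow> nat \<Rightarrow> real) \<Rightarrow> (nat \<Rightarrow> real) \<Rightarrow> (nat \<Rightarrow> nat \<Rightarrow> real) \<Rightarrow> bool" where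
  "orth_eigenbasis N S e q \<longleftrightarrow>
     (\<forall>i<N. dot N (q i) (q i) > 0 \<and> (\<forall>a<N. matvec N S (q i) a = e i * q i a))
     \<and> (\<forall>i<N. \<forall>i'<N. i \<noteq> i' \<longrightarrow> dot N (q i) (q i') = 0) \<and> (\<forall>x. in_span N q N x)"

lemma orth_eigenbasis_of_char_poly:
  fixes M :: "real mat"
  assumes M: "M \<in> carrier_mat N N"
    and sym: "\<And>a b. a < N \<Longrightarrow> b < N \<Longrightarrow> M $$ (a, b) = M $$ (b, a)"
    and cp: "char_poly M = (\<Prod>e\<leftarrow>es. [:-e, 1:])"
  shows "\<exists>q. orth_eigenbasis N (\<lambda>a b. M $$ (a, b)) (\<lambda>i. es ! i) q"
proof -
  obtain B P Q where sd: "schur_decomposition M es = (B, P, Q)"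
    by (cases "schur_decomposition M es") auto
  from schur_decomposition[OF M cp sd] have wit: "similar_mat_wit M B P Q"
    and ut: "upper_triangular B" and dg: "diag_mat B = es" by auto
  from wit M have B: "B \<in> carrier_mat N N" and P: "P \<in> carrier_mat N N" and Q: "Q \<in> carrier_mat N N"
    and PQ: "P * Q = 1\<^sub>m N" and QP: "Q * P = 1\<^sub>m N" and MPBQ: "M = P * B * Q"
    unfolding similar_mat_wit_def Let_def by auto
  have MP: "M * P = P * B"
    using P B Q QP by (simp add: MPBQ assoc_mult_mat[of _ N N _ N _ N])
  have tri: "matvec N (\<lambda>a b. M $$ (a, b)) (\<lambda>a. P $$ (a, j)) a
      = (\<Sum>k<j. B $$ (k, j) * P $$ (a, k)) + es ! j * P $$ (a, j)" if j: "j < N" and a: "a < N" for j a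
  proof -
    have "matvec N (\<lambda>a b. M $$ (a, b)) (\<lambda>a. P $$ (a, j)) a = (P * B) $$ (a, j)"
      unfolding matvec_def using index_mult_mat_sum[OF M P a j] MP by simp
    also have "\<dots> = (\<Sum>k<Suc j. P $$ (a, k) * B $$ (k, j))"
      unfolding index_mult_mat_sum[OF P B a j]
      by (rule sum.mono_neutral_right) (use ut B j in \<open>auto simp: upper_triangular_def\<close>)
    also have "\<dots> = (\<Sum>k<j. B $$ (k, j) * P $$ (a, k)) + es ! j * P $$ (a, j)"
      using dg[symmetric] j B by (simp add: diag_mat_def mult.commute)
    finally show ?thesis .
  qed
  interpret triangularized N "\<lambda>a b. M $$ (a, b)" "\<lambda>j a. P $$ (a, j)" "\<lambda>k j. B $$ (k, j)"
    "\<lambda>i a. Q $$ (i, a)" "\<lambda>j. es ! j"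
    by unfold_locales (use sym tri index_mult_mat_sum[OF Q P] QP in auto)
  obtain q where "orth_eigen_prefix N q" using orth_eigen_prefix_exists by blast
  moreover have "in_span N q N x" for x
    using in_span_trans[OF _ in_span_columns_of_invertible[OF P Q PQ]] \<open>orth_eigen_prefix N q\<close>
    unfolding orth_eigen_prefix_def by blast
  ultimately show ?thesis unfolding orth_eigen_prefix_def orth_eigenbasis_def by blast
qed

lemma prod_list_map_eq_prod_mset_image: "(\<Prod>e\<leftarrow>es. f e) = prod_mset (image_mset f (mset es))"
  by (induction es) auto

lemma linear_factors_eq_imp_mset_eq:
  fixes es es' :: "'a :: field list"
  assumes "(\<Prod>e\<leftarrow>es. [:-e, 1:]) = (\<Prod>e\<leftarrow>es'. [:-e, 1:])"
  shows "mset es = mset es'"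
  using assms
proof (induction es arbitrary: es')
  case Nil
  have "degree (\<Prod>e\<leftarrow>es'. [:-e, 1:]) = length es'" using degree_linear_factors[of uminus es'] by simp
  with Nil show ?case by simp
next
  case (Cons a es)
  have "poly (\<Prod>e\<leftarrow>a # es. [:-e, 1:]) a = 0" by (simp add: poly_prod_list)
  then have "poly (\<Prod>e\<leftarrow>es'. [:-e, 1:]) a = 0" by (simp only: Cons.prems)
  then have "a \<in> set es'" by (auto simp: poly_prod_list o_def prod_list_zero_iff)
  then have m: "mset es' = add_mset a (mset (remove1 a es'))" by (simp add: insert_DiffM)
  have "[:-a, 1:] * (\<Prod>e\<leftarrow>es. [:-e, 1:]) = [:-a, 1:] * (\<Prod>e\<leftarrow>remove1 a es'. [:-e, 1:])"
    using Cons.prems unfolding prod_list_map_eq_prod_mset_image m by simp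
  then have "(\<Prod>e\<leftarrow>es. [:-e, 1:]) = (\<Prod>e\<leftarrow>remove1 a es'. [:-e, 1:])"
    by (metis mult_left_cancel pCons_eq_0_iff zero_neq_one)
  from Cons.IH[OF this] have "mset (a # es) = add_mset a (mset (remove1 a es'))" by simp
  with m show ?case by metis
qed

lemma sorted_desc_mset_eq_imp_eq:
  fixes es es' :: "real list"
  assumes "sorted_wrt (\<ge>) es" "sorted_wrt (\<ge>) es'" "mset es = mset es'"
  shows "es = es'"
proof -
  have "sort (rev es') = rev es"
    using assms by (intro properties_for_sort) (simp_all add: sorted_wrt_rev)
  moreover have "sort (rev es') = rev es'" using assms(2) by (intro sorted_sort_id) (simp add: sorted_wrt_rev)
  ultimately show ?thesis by simp
qed

lemma eigen_list_eqI:
  assumes "char_poly M = (\<Prod>e\<leftarrow>es. [:-e, 1:])" and "sorted_wrt (\<ge>) es"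
  shows "eigen_list M = es"
  unfolding eigen_list_def
proof (rule the_equality)
  fix es' assume "sorted_wrt (\<ge>) es' \<and> char_poly M = (\<Prod>e\<leftarrow>es'. [:-e, 1:])"
  then show "es' = es"
    using assms linear_factors_eq_imp_mset_eq[of es' es] sorted_desc_mset_eq_imp_eq[of es' es] by auto
qed (use assms in simp)

lemma complex_eigenvalue_of_real_symmetric_is_real:
  fixes M :: "real mat"
  assumes M: "M \<in> carrier_mat N N"
    and sym: "\<And>a b. a < N \<Longrightarrow> b < N \<Longrightarrow> M $$ (a, b) = M $$ (b, a)"
    and ev: "eigenvalue (map_mat of_real M) a"
  shows "of_real (Re a) = a"
proof -
  obtain v where v: "v \<in> carrier_vec N" "v \<noteq> 0\<^sub>v N" "map_mat of_real M *\<^sub>v v = a \<cdot>\<^sub>v v"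
    using ev M unfolding eigenvalue_def eigenvector_def by auto
  have Mv: "(\<Sum>j<N. of_real (M $$ (i, j)) * v $ j) = a * v $ i" if "i < N" for i
  proof -
    have "(map_mat of_real M *\<^sub>v v) $ i = a * v $ i" using v that by simp
    then show ?thesis using that M v(1) by (simp add: scalar_prod_def atLeast0LessThan)
  qed
  define s where "s = (\<Sum>i<N. cnj (v $ i) * (\<Sum>j<N. of_real (M $$ (i, j)) * v $ j))"
  define R where "R = (\<Sum>i<N. (cmod (v $ i))\<^sup>2)"
  have "s = (\<Sum>i<N. a * (cnj (v $ i) * v $ i))"
    unfolding s_def by (intro sum.cong refl) (simp add: Mv mult.left_commute)
  also have "\<dots> = (\<Sum>i<N. a * of_real ((cmod (v $ i))\<^sup>2))"
    by (intro sum.cong refl) (simp only: complex_norm_square mult.commute)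
  also have "\<dots> = a * of_real R" unfolding R_def by (simp add: sum_distrib_left of_real_sum)
  finally have sR: "s = a * of_real R" .
  text \<open>\<open>s = v\<^sup>* M v\<close> is real because \<open>M\<close> is real symmetric.\<close>
  have "cnj s = (\<Sum>j<N. \<Sum>i<N. v $ i * of_real (M $$ (i, j)) * cnj (v $ j))"
    unfolding s_def by (subst sum.swap) (simp add: sum_distrib_left mult_ac)
  also have "\<dots> = s"
    unfolding s_def by (intro sum.cong refl) (auto simp: sum_distrib_left sym mult_ac)
  finally have "cnj s = s" .
  moreover obtain i where i: "i < N" "v $ i \<noteq> 0"
    using v(1,2) by (metis eq_vecI carrier_vecD index_zero_vec)
  then have "R > 0"
    unfolding R_def by (intro sum_pos2[of _ i]) auto
  ultimately have "cnj a = a" using sR by simp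
  then have "Im a = 0" by (simp add: complex_eq_iff)
  then show ?thesis by (simp add: complex_eq_iff)
qed

lemma char_poly_real_symmetric_splits:
  fixes M :: "real mat"
  assumes M: "M \<in> carrier_mat N N"
    and sym: "\<And>a b. a < N \<Longrightarrow> b < N \<Longrightarrow> M $$ (a, b) = M $$ (b, a)"
  shows "\<exists>es. char_poly M = (\<Prod>e\<leftarrow>es. [:-e, 1:])"
proof -
  let ?Mc = "map_mat (of_real :: real \<Rightarrow> complex) M"
  have Mc: "?Mc \<in> carrier_mat N N" using M by simp
  obtain as where as: "char_poly ?Mc = (\<Prod>a\<leftarrow>as. [:-a, 1:])"
    using char_poly_factorized[OF Mc] by blast
  have real: "of_real (Re a) = a" if "a \<in> set as" for a
  proof (rule complex_eigenvalue_of_real_symmetric_is_real[OF M sym])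
    have "poly (char_poly ?Mc) a = 0" using that unfolding as
      by (simp add: poly_prod_list o_def prod_list_zero_iff)
    then show "eigenvalue ?Mc a" using eigenvalue_root_char_poly[OF Mc] by simp
  qed
  interpret mp: map_poly_inj_idom_hom "of_real :: real \<Rightarrow> complex" ..
  have "map_poly of_real (char_poly M) = char_poly ?Mc"
    by (rule of_real_hom.char_poly_hom[OF M, symmetric])
  also have "\<dots> = (\<Prod>a\<leftarrow>map (\<lambda>a. of_real (Re a)) as. [:-a, 1:])"
    unfolding as by (simp add: real o_def cong: map_cong)
  also have "\<dots> = map_poly of_real (\<Prod>e\<leftarrow>map Re as. [:-e, 1:])"
    by (simp add: mp.hom_prod_list o_def)
  finally show ?thesis by (intro exI) (rule mp.injectivity)
qed

lemma eigen_list_orth_eigenbasis: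
  fixes M :: "real mat"
  assumes M: "M \<in> carrier_mat N N"
    and sym: "\<And>a b. a < N \<Longrightarrow> b < N \<Longrightarrow> M $$ (a, b) = M $$ (b, a)"
  shows "sorted_wrt (\<ge>) (eigen_list M)" and "length (eigen_list M) = N"
    and "\<exists>q. orth_eigenbasis N (\<lambda>a b. M $$ (a, b)) (\<lambda>i. eigen_list M ! i) q"
proof -
  obtain es0 where es0: "char_poly M = (\<Prod>e\<leftarrow>es0. [:-e, 1:])"
    using char_poly_real_symmetric_splits[OF M sym] by blast
  define es where "es = rev (sort es0)"
  have sorted: "sorted_wrt (\<ge>) es" unfolding es_def by (simp add: sorted_wrt_rev)
  have cp: "char_poly M = (\<Prod>e\<leftarrow>es. [:-e, 1:])"
    unfolding es0 es_def prod_list_map_eq_prod_mset_image by simp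
  have el: "eigen_list M = es" by (rule eigen_list_eqI[OF cp sorted])
  show "sorted_wrt (\<ge>) (eigen_list M)" unfolding el by (rule sorted)
  show "length (eigen_list M) = N"
    using degree_monic_char_poly[OF M] degree_linear_factors[of uminus es] cp el by simp
  show "\<exists>q. orth_eigenbasis N (\<lambda>a b. M $$ (a, b)) (\<lambda>i. eigen_list M ! i) q"
    unfolding el by (rule orth_eigenbasis_of_char_poly[OF M sym cp])
qed

section \<open>Comparison of spectral gaps\<close>

lemma orth_eigenbasis_expansion:
  assumes ob: "orth_eigenbasis N S e q" and f: "\<And>a. a < N \<Longrightarrow> f a = (\<Sum>k<N. c k * q k a)"
  shows "dot N f (matvec N S f) = (\<Sum>k<N. (c k)\<^sup>2 * e k * dot N (q k) (q k))"
    and "dot N f f = (\<Sum>k<N. (c k)\<^sup>2 * dot N (q k) (q k))"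
    and "\<And>i. i < N \<Longrightarrow> dot N f (q i) = c i * dot N (q i) (q i)"
proof -
  from ob have eig: "\<And>i a. i < N \<Longrightarrow> a < N \<Longrightarrow> matvec N S (q i) a = e i * q i a"
    and orth: "\<And>i j. i < N \<Longrightarrow> j < N \<Longrightarrow> i \<noteq> j \<Longrightarrow> dot N (q i) (q j) = 0"
    unfolding orth_eigenbasis_def by auto
  have Sf: "matvec N S f a = (\<Sum>k<N. (c k * e k) * q k a)" if "a < N" for a
  proof -
    have "matvec N S f a = (\<Sum>k<N. c k * matvec N S (q k) a)"
      using matvec_cong[of N f _ S, OF f] matvec_sum by metis
    also have "\<dots> = (\<Sum>k<N. (c k * e k) * q k a)" by (intro sum.cong) (auto simp: eig that)
    finally show ?thesis .
  qed
  have "dot N f (matvec N S f) = dot N (\<lambda>a. \<Sum>k<N. c k * q k a) (\<lambda>a. \<Sum>k<N. (c k * e k) * q k a)"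
    by (rule dot_cong) (simp_all add: f Sf)
  also have "\<dots> = (\<Sum>k<N. c k * (c k * e k) * dot N (q k) (q k))"
    by (rule dot_orthogonal_expansion) (rule orth)
  finally show "dot N f (matvec N S f) = (\<Sum>k<N. (c k)\<^sup>2 * e k * dot N (q k) (q k))"
    by (simp add: power2_eq_square mult_ac)
  have "dot N f f = dot N (\<lambda>a. \<Sum>k<N. c k * q k a) (\<lambda>a. \<Sum>k<N. c k * q k a)"
    by (rule dot_cong) (simp_all add: f)
  also have "\<dots> = (\<Sum>k<N. c k * c k * dot N (q k) (q k))" by (rule dot_orthogonal_expansion) (rule orth)
  finally show "dot N f f = (\<Sum>k<N. (c k)\<^sup>2 * dot N (q k) (q k))" by (simp add: power2_eq_square)
  fix i assume i: "i < N"
  have "dot N f (q i) = dot N (\<lambda>a. \<Sum>k<N. c k * q k a) (q i)" by (rule dot_cong) (simp_all add: f)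
  also have "\<dots> = c i * dot N (q i) (q i)"
    unfolding dot_sum_left by (rule dot_orthogonal_sum) (use i orth in auto)
  finally show "dot N f (q i) = c i * dot N (q i) (q i)" .
qed

lemma sorted_desc_nth_le_second:
  assumes "sorted_wrt (\<ge>) (es :: real list)" "1 \<le> k" "k < length es"
  shows "es ! k \<le> es ! 1"
  using assms by (cases "k = 1") (auto simp: sorted_wrt_iff_nth_less)

lemma rayleigh_le_second_eigenvalue:
  assumes ob: "orth_eigenbasis N S (\<lambda>i. es ! i) q" and s: "sorted_wrt (\<ge>) es"
    and len: "length es = N" and N: "N \<ge> 2" and orth0: "dot N f (q 0) = 0"
  shows "dot N f (matvec N S f) \<le> es ! 1 * dot N f f"
proof -
  from ob obtain c where c: "\<And>a. a < N \<Longrightarrow> f a = (\<Sum>k<N. c k * q k a)"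
    unfolding orth_eigenbasis_def in_span_def by blast
  have pos: "\<And>i. i < N \<Longrightarrow> dot N (q i) (q i) > 0" using ob unfolding orth_eigenbasis_def by auto
  have "c 0 * dot N (q 0) (q 0) = 0" using orth_eigenbasis_expansion(3)[OF ob c, of 0] orth0 N by simp
  then have c0: "c 0 = 0" using pos[of 0] N by simp
  have "dot N f (matvec N S f) = (\<Sum>k<N. (c k)\<^sup>2 * es ! k * dot N (q k) (q k))"
    by (rule orth_eigenbasis_expansion(1)[OF ob c])
  also have "\<dots> \<le> (\<Sum>k<N. es ! 1 * ((c k)\<^sup>2 * dot N (q k) (q k)))"
  proof (rule sum_mono)
    fix k assume k: "k \<in> {..<N}"
    show "(c k)\<^sup>2 * es ! k * dot N (q k) (q k) \<le> es ! 1 * ((c k)\<^sup>2 * dot N (q k) (q k))"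
    proof (cases "k = 0")
      case False
      then have "es ! k \<le> es ! 1" using sorted_desc_nth_le_second[OF s, of k] k len by auto
      moreover have "(c k)\<^sup>2 * dot N (q k) (q k) \<ge> 0" using pos[of k] k by simp
      ultimately show ?thesis by (metis mult.commute mult.left_commute mult_right_mono)
    qed (simp add: c0)
  qed
  also have "\<dots> = es ! 1 * dot N f f" by (simp add: orth_eigenbasis_expansion(2)[OF ob c] sum_distrib_left)
  finally show ?thesis .
qed

lemma sum_lessThan_eq_first_two:
  assumes "\<And>k. 2 \<le> k \<Longrightarrow> g k = (0::real)" and "(N::nat) \<ge> 2"
  shows "(\<Sum>k<N. g k) = g 0 + g 1"
proof -
  have "(\<Sum>k<N. g k) = (\<Sum>k<2. g k)" by (rule sum.mono_neutral_right) (use assms in auto)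
  then show ?thesis by (simp add: numeral_2_eq_2)
qed

text \<open>The witness is a combination of the first two eigenvectors orthogonal to \<open>u\<close>.\<close>

lemma exists_orthogonal_rayleigh_ge_second_eigenvalue:
  assumes ob: "orth_eigenbasis N S (\<lambda>i. es ! i) q" and s: "sorted_wrt (\<ge>) es"
    and len: "length es = N" and N: "N \<ge> 2"
  shows "\<exists>f. dot N f u = 0 \<and> dot N f f > 0 \<and> dot N f (matvec N S f) \<ge> es ! 1 * dot N f f"
proof -
  define \<alpha> where "\<alpha> = (if dot N (q 0) u = 0 then 1 else dot N (q 1) u)"
  define \<beta> where "\<beta> = (if dot N (q 0) u = 0 then 0 else - dot N (q 0) u)"
  define c where "c k = (if k = 0 then \<alpha> else if k = 1 then \<beta> else 0)" for k :: nat
  define f where "f a = (\<Sum>k<N. c k * q k a)" for a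
  have pos: "\<And>i. i < N \<Longrightarrow> dot N (q i) (q i) > 0" using ob unfolding orth_eigenbasis_def by auto
  have e01: "es ! 1 \<le> es ! 0" using s len N by (auto simp: sorted_wrt_iff_nth_less)
  have f_exp: "\<And>a. a < N \<Longrightarrow> f a = (\<Sum>k<N. c k * q k a)" by (simp add: f_def)
  have "dot N f u = \<alpha> * dot N (q 0) u + \<beta> * dot N (q 1) u"
    unfolding f_def dot_sum_left by (subst sum_lessThan_eq_first_two[OF _ N]) (auto simp: c_def)
  then have fu: "dot N f u = 0" unfolding \<alpha>_def \<beta>_def by (auto simp: algebra_simps)
  have "dot N f f = (\<Sum>k<N. (c k)\<^sup>2 * dot N (q k) (q k))"
    by (rule orth_eigenbasis_expansion(2)[OF ob f_exp])
  also have "\<dots> = (c 0)\<^sup>2 * dot N (q 0) (q 0) + (c 1)\<^sup>2 * dot N (q 1) (q 1)"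
    by (rule sum_lessThan_eq_first_two[OF _ N]) (simp add: c_def)
  finally have ff: "dot N f f = \<alpha>\<^sup>2 * dot N (q 0) (q 0) + \<beta>\<^sup>2 * dot N (q 1) (q 1)"
    by (simp add: c_def)
  have "\<alpha> \<noteq> 0 \<or> \<beta> \<noteq> 0" unfolding \<alpha>_def \<beta>_def by auto
  then have "dot N f f > 0" unfolding ff using pos[of 0] pos[of 1] N
    by (auto simp: add_pos_nonneg add_nonneg_pos)
  moreover have "dot N f (matvec N S f) \<ge> es ! 1 * dot N f f"
  proof -
    have "dot N f (matvec N S f) = (\<Sum>k<N. (c k)\<^sup>2 * es ! k * dot N (q k) (q k))"
      by (rule orth_eigenbasis_expansion(1)[OF ob f_exp])
    also have "\<dots> = (c 0)\<^sup>2 * es ! 0 * dot N (q 0) (q 0) + (c 1)\<^sup>2 * es ! 1 * dot N (q 1) (q 1)"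
      by (rule sum_lessThan_eq_first_two[OF _ N]) (simp add: c_def)
    finally have "dot N f (matvec N S f) = \<alpha>\<^sup>2 * es ! 0 * dot N (q 0) (q 0) + \<beta>\<^sup>2 * es ! 1 * dot N (q 1) (q 1)"
      by (simp add: c_def)
    moreover have "\<alpha>\<^sup>2 * es ! 0 * dot N (q 0) (q 0) \<ge> \<alpha>\<^sup>2 * es ! 1 * dot N (q 0) (q 0)"
      using e01 pos[of 0] N by (intro mult_right_mono mult_left_mono) auto
    ultimately show ?thesis unfolding ff by (simp add: algebra_simps)
  qed
  ultimately show ?thesis using fu by blast
qed

lemma spectral_gap_psd:
  fixes M :: "real mat"
  assumes M: "M \<in> carrier_mat N N" and N: "N \<ge> 2"
    and sym: "\<And>a b. a < N \<Longrightarrow> b < N \<Longrightarrow> M $$ (a, b) = M $$ (b, a)"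
    and psd: "\<And>x. dot N x (matvec N (\<lambda>a b. M $$ (a, b)) x) \<ge> 0"
  shows "spectral_gap M = 1 - eigen_list M ! 1"
proof -
  let ?es = "eigen_list M"
  obtain q where ob: "orth_eigenbasis N (\<lambda>a b. M $$ (a, b)) (\<lambda>i. ?es ! i) q"
    using eigen_list_orth_eigenbasis(3)[OF M sym] by blast
  have s: "sorted_wrt (\<ge>) ?es" and len: "length ?es = N"
    using eigen_list_orth_eigenbasis(1,2)[OF M sym] by auto
  have nonneg: "?es ! i \<ge> 0" if i: "i < N" for i
  proof -
    from ob i have pos: "dot N (q i) (q i) > 0"
      and eig: "\<And>a. a < N \<Longrightarrow> matvec N (\<lambda>a b. M $$ (a, b)) (q i) a = ?es ! i * q i a"
      unfolding orth_eigenbasis_def by auto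
    have "dot N (q i) (matvec N (\<lambda>a b. M $$ (a, b)) (q i)) = ?es ! i * dot N (q i) (q i)"
      unfolding dot_scale_right[symmetric] by (rule dot_cong) (simp_all add: eig)
    with psd[of "q i"] pos show ?thesis by (simp add: zero_le_mult_iff)
  qed
  have "last ?es = ?es ! (N - 1)" using len N by (subst last_conv_nth) auto
  moreover have "?es ! (N - 1) \<le> ?es ! 1" by (rule sorted_desc_nth_le_second[OF s]) (use len N in auto)
  ultimately show ?thesis unfolding spectral_gap_def Let_def using nonneg[of "N - 1"] nonneg[of 1] N by simp
qed

text \<open>Courant--Fischer: a test vector orthogonal to the top eigenvector of \<open>M\<^sub>2\<close> whose Rayleigh
  quotient for \<open>M\<^sub>1\<close> is at least \<open>\<lambda>\<^sub>2(M\<^sub>1)\<close> shows \<open>\<lambda>\<^sub>2(M\<^sub>1) \<le> \<lambda>\<^sub>2(M\<^sub>2)\<close>.\<close>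

lemma spectral_gap_mono:
  fixes M1 M2 :: "real mat"
  assumes N: "N \<ge> 2" and M1: "M1 \<in> carrier_mat N N" and M2: "M2 \<in> carrier_mat N N"
    and sym1: "\<And>a b. a < N \<Longrightarrow> b < N \<Longrightarrow> M1 $$ (a, b) = M1 $$ (b, a)"
    and sym2: "\<And>a b. a < N \<Longrightarrow> b < N \<Longrightarrow> M2 $$ (a, b) = M2 $$ (b, a)"
    and psd: "\<And>x. dot N x (matvec N (\<lambda>a b. M1 $$ (a, b)) x) \<ge> 0"
    and le: "\<And>x. dot N x (matvec N (\<lambda>a b. M1 $$ (a, b)) x) \<le> dot N x (matvec N (\<lambda>a b. M2 $$ (a, b)) x)"
  shows "spectral_gap M1 \<ge> spectral_gap M2"
proof -
  obtain q1 where ob1: "orth_eigenbasis N (\<lambda>a b. M1 $$ (a, b)) (\<lambda>i. eigen_list M1 ! i) q1"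
    using eigen_list_orth_eigenbasis(3)[OF M1 sym1] by blast
  obtain q2 where ob2: "orth_eigenbasis N (\<lambda>a b. M2 $$ (a, b)) (\<lambda>i. eigen_list M2 ! i) q2"
    using eigen_list_orth_eigenbasis(3)[OF M2 sym2] by blast
  note s1 = eigen_list_orth_eigenbasis(1,2)[OF M1 sym1]
  note s2 = eigen_list_orth_eigenbasis(1,2)[OF M2 sym2]
  obtain f where f0: "dot N f (q2 0) = 0" and fpos: "dot N f f > 0"
    and f1: "dot N f (matvec N (\<lambda>a b. M1 $$ (a, b)) f) \<ge> eigen_list M1 ! 1 * dot N f f"
    using exists_orthogonal_rayleigh_ge_second_eigenvalue[OF ob1 s1 N] by blast
  have f2: "dot N f (matvec N (\<lambda>a b. M2 $$ (a, b)) f) \<le> eigen_list M2 ! 1 * dot N f f"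
    by (rule rayleigh_le_second_eigenvalue[OF ob2 s2 N f0])
  have "eigen_list M1 ! 1 * dot N f f \<le> eigen_list M2 ! 1 * dot N f f" using f1 f2 le[of f] by linarith
  then have "eigen_list M1 ! 1 \<le> eigen_list M2 ! 1" using fpos by simp
  moreover have "dot N x (matvec N (\<lambda>a b. M2 $$ (a, b)) x) \<ge> 0" for x using psd[of x] le[of x] by linarith
  ultimately show ?thesis
    using spectral_gap_psd[OF M1 N sym1 psd] spectral_gap_psd[OF M2 N sym2] by simp
qed

section \<open>Reversible transition kernels\<close>

definition kernel_form :: "'s set \<Rightarrow> ('s \<Rightarrow> 's \<Rightarrow> real) \<Rightarrow> ('s \<Rightarrow> real) \<Rightarrow> real" where
  "kernel_form \<Omega> K x = (\<Sum>\<sigma>\<in>\<Omega>. \<Sum>\<tau>\<in>\<Omega>. x \<sigma> * x \<tau> * K \<sigma> \<tau>)"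

lemma kernel_form_average:
  "kernel_form \<Omega> (\<lambda>\<sigma> \<tau>. c * (\<Sum>t\<in>T. K t \<sigma> \<tau>)) x = c * (\<Sum>t\<in>T. kernel_form \<Omega> (K t) x)"
proof -
  have "kernel_form \<Omega> (\<lambda>\<sigma> \<tau>. c * (\<Sum>t\<in>T. K t \<sigma> \<tau>)) x
      = c * (\<Sum>\<sigma>\<in>\<Omega>. \<Sum>\<tau>\<in>\<Omega>. \<Sum>t\<in>T. x \<sigma> * x \<tau> * K t \<sigma> \<tau>)"
    unfolding kernel_form_def by (simp add: sum_distrib_left mult_ac)
  also have "(\<Sum>\<sigma>\<in>\<Omega>. \<Sum>\<tau>\<in>\<Omega>. \<Sum>t\<in>T. x \<sigma> * x \<tau> * K t \<sigma> \<tau>)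
      = (\<Sum>\<sigma>\<in>\<Omega>. \<Sum>t\<in>T. \<Sum>\<tau>\<in>\<Omega>. x \<sigma> * x \<tau> * K t \<sigma> \<tau>)"
    by (rule sum.cong[OF refl sum.swap])
  also have "\<dots> = (\<Sum>t\<in>T. \<Sum>\<sigma>\<in>\<Omega>. \<Sum>\<tau>\<in>\<Omega>. x \<sigma> * x \<tau> * K t \<sigma> \<tau>)"
    by (rule sum.swap)
  finally show ?thesis unfolding kernel_form_def .
qed

lemma state_enum_bij: "finite S \<Longrightarrow> bij_betw (state_enum S) {..<card S} S"
proof -
  assume "finite S"
  then obtain h where "bij_betw h {..<card S} S"
    using ex_bij_betw_nat_finite[of S] by (auto simp: atLeast0LessThan)
  then show ?thesis unfolding state_enum_def by (rule someI[where P = "\<lambda>f. bij_betw f {..<card S} S"])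
qed

lemma diag_mult_mat_index:
  assumes "A \<in> carrier_mat N N" "i < N" "j < N"
  shows "(mat N N (\<lambda>(i, j). if i = j then s i else 0) * A) $$ (i, j) = s i * A $$ (i, j)"
proof -
  have "(mat N N (\<lambda>(i, j). if i = j then s i else 0) * A) $$ (i, j)
      = (\<Sum>k<N. (if i = k then s i else 0) * A $$ (k, j))"
    using assms by (simp add: scalar_prod_def atLeast0LessThan)
  also have "\<dots> = (\<Sum>k<N. if i = k then s i * A $$ (k, j) else 0)" by (intro sum.cong) auto
  also have "\<dots> = s i * A $$ (i, j)" using assms by (simp add: sum.delta)
  finally show ?thesis .
qed

lemma mat_mult_diag_index:
  assumes "A \<in> carrier_mat N N" "i < N" "j < N"
  shows "(A * mat N N (\<lambda>(i, j). if i = j then s i else 0)) $$ (i, j) = A $$ (i, j) * s j"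
proof -
  have "(A * mat N N (\<lambda>(i, j). if i = j then s i else 0)) $$ (i, j)
      = (\<Sum>k<N. A $$ (i, k) * (if k = j then s k else 0))"
    using assms by (simp add: scalar_prod_def atLeast0LessThan)
  also have "\<dots> = (\<Sum>k<N. if k = j then A $$ (i, k) * s k else 0)" by (intro sum.cong) auto
  also have "\<dots> = A $$ (i, j) * s j" using assms by (simp add: sum.delta')
  finally show ?thesis .
qed

lemma diag_mult_inverse_diag:
  assumes "\<And>i. i < N \<Longrightarrow> s i \<noteq> (0::real)"
  shows "mat N N (\<lambda>(i, j). if i = j then s i else 0) * mat N N (\<lambda>(i, j). if i = j then 1 / s i else 0)
    = 1\<^sub>m N"
proof (rule eq_matI)
  fix i j assume "i < dim_row (1\<^sub>m N :: real mat)" "j < dim_col (1\<^sub>m N :: real mat)"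
  then have i: "i < N" and j: "j < N" by auto
  show "(mat N N (\<lambda>(i, j). if i = j then s i else 0) * mat N N (\<lambda>(i, j). if i = j then 1 / s i else 0)) $$ (i, j)
      = 1\<^sub>m N $$ (i, j)"
    using diag_mult_mat_index[of "mat N N (\<lambda>(i, j). if i = j then 1 / s i else 0)" N i j s] i j assms[OF i] assms[OF j]
    by simp
qed auto

lemma spectral_gap_diag_similar:
  fixes M :: "real mat"
  assumes M: "M \<in> carrier_mat N N" and s: "\<And>i. i < N \<Longrightarrow> s i > 0"
  shows "spectral_gap (mat N N (\<lambda>(i, j). s i * M $$ (i, j) / s j)) = spectral_gap M"
proof -
  define D where "D = mat N N (\<lambda>(i, j). if i = j then s i else 0)"
  define Di where "Di = mat N N (\<lambda>(i, j). if i = j then 1 / s i else 0)"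
  define S where "S = mat N N (\<lambda>(i, j). s i * M $$ (i, j) / s j)"
  have D: "D \<in> carrier_mat N N" and Di: "Di \<in> carrier_mat N N" and S: "S \<in> carrier_mat N N"
    unfolding D_def Di_def S_def by auto
  have "D * M * Di = S"
  proof (rule eq_matI)
    fix i j assume "i < dim_row S" "j < dim_col S"
    then have i: "i < N" and j: "j < N" using S by auto
    have "(D * M * Di) $$ (i, j) = (D * M) $$ (i, j) * (1 / s j)"
      unfolding Di_def using mat_mult_diag_index[of "D * M" N i j "\<lambda>i. 1 / s i"] D M i j by simp
    then show "(D * M * Di) $$ (i, j) = S $$ (i, j)"
      using i j unfolding D_def diag_mult_mat_index[OF M i j] by (simp add: S_def)
  qed (use D M Di S in auto)
  moreover have "D * Di = 1\<^sub>m N"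
    unfolding D_def Di_def by (rule diag_mult_inverse_diag) (use s in force)
  moreover from this have "Di * D = 1\<^sub>m N" by (rule mat_mult_left_right_inverse[OF D Di])
  ultimately have "similar_mat_wit S M D Di"
    unfolding similar_mat_wit_def Let_def using S D Di M by auto
  then have "similar_mat S M" unfolding similar_mat_def by blast
  then have "char_poly S = char_poly M" by (rule char_poly_similar)
  then show ?thesis unfolding S_def[symmetric] spectral_gap_def eigen_list_def by (simp only:)
qed

definition sym_trans_mat :: "'s set \<Rightarrow> ('s \<Rightarrow> real) \<Rightarrow> ('s \<Rightarrow> 's \<Rightarrow> real) \<Rightarrow> real mat" where
  "sym_trans_mat \<Omega> w P = mat (card \<Omega>) (card \<Omega>) (\<lambda>(i, j).
     sqrt (w (state_enum \<Omega> i)) * P (state_enum \<Omega> i) (state_enum \<Omega> j) / sqrt (w (state_enum \<Omega> j)))"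

context
  fixes \<Omega> :: "'s set" and w :: "'s \<Rightarrow> real"
  assumes fin: "finite \<Omega>" and wpos: "\<And>\<sigma>. \<sigma> \<in> \<Omega> \<Longrightarrow> w \<sigma> > 0"
begin

private abbreviation "e \<equiv> state_enum \<Omega>"

private lemma e_in: "i < card \<Omega> \<Longrightarrow> e i \<in> \<Omega>"
  using state_enum_bij[OF fin] by (auto simp: bij_betw_def)

lemma spectral_gap_sym_trans_mat:
  "spectral_gap (sym_trans_mat \<Omega> w P) = spectral_gap (trans_mat \<Omega> P)"
proof -
  have "sym_trans_mat \<Omega> w P
      = mat (card \<Omega>) (card \<Omega>) (\<lambda>(i, j). sqrt (w (e i)) * trans_mat \<Omega> P $$ (i, j) / sqrt (w (e j)))"
    unfolding sym_trans_mat_def trans_mat_def by (rule eq_matI) auto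
  also have "spectral_gap \<dots> = spectral_gap (trans_mat \<Omega> P)"
    by (rule spectral_gap_diag_similar) (auto simp: trans_mat_def e_in wpos)
  finally show ?thesis .
qed

lemma sym_trans_mat_index:
  assumes "i < card \<Omega>" "j < card \<Omega>"
  shows "sym_trans_mat \<Omega> w P $$ (i, j) = w (e i) * P (e i) (e j) / (sqrt (w (e i)) * sqrt (w (e j)))"
proof -
  have pos: "w (e i) > 0" using wpos[OF e_in[OF assms(1)]] .
  have "sym_trans_mat \<Omega> w P $$ (i, j) = sqrt (w (e i)) * P (e i) (e j) / sqrt (w (e j))"
    using assms by (simp add: sym_trans_mat_def)
  also have "\<dots> = w (e i) * P (e i) (e j) / (sqrt (w (e i)) * sqrt (w (e j)))"
    using pos by (metis real_div_sqrt less_imp_le divide_divide_eq_left times_divide_eq_left)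
  finally show ?thesis .
qed

lemma sym_trans_mat_symmetric:
  assumes rev: "\<And>\<sigma> \<tau>. \<sigma> \<in> \<Omega> \<Longrightarrow> \<tau> \<in> \<Omega> \<Longrightarrow> w \<sigma> * P \<sigma> \<tau> = w \<tau> * P \<tau> \<sigma>"
    and "i < card \<Omega>" "j < card \<Omega>"
  shows "sym_trans_mat \<Omega> w P $$ (i, j) = sym_trans_mat \<Omega> w P $$ (j, i)"
  using assms by (simp add: sym_trans_mat_index e_in mult.commute)

lemma dot_sym_trans_mat:
  "dot (card \<Omega>) x (matvec (card \<Omega>) (\<lambda>a b. sym_trans_mat \<Omega> w P $$ (a, b)) x)
     = kernel_form \<Omega> (\<lambda>\<sigma> \<tau>. w \<sigma> * P \<sigma> \<tau>) (\<lambda>\<sigma>. x (inv_into {..<card \<Omega>} e \<sigma>) / sqrt (w \<sigma>))"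
    (is "_ = kernel_form \<Omega> ?K ?y")
proof -
  have bij: "bij_betw e {..<card \<Omega>} \<Omega>" by (rule state_enum_bij[OF fin])
  have y: "?y (e i) = x i / sqrt (w (e i))" if "i < card \<Omega>" for i
    using bij that by (simp add: bij_betw_inv_into_left)
  have "dot (card \<Omega>) x (matvec (card \<Omega>) (\<lambda>a b. sym_trans_mat \<Omega> w P $$ (a, b)) x)
      = (\<Sum>a<card \<Omega>. \<Sum>b<card \<Omega>. ?y (e a) * ?y (e b) * ?K (e a) (e b))"
    unfolding dot_def matvec_def sum_distrib_left
    by (intro sum.cong refl) (simp add: sym_trans_mat_index y)
  also have "\<dots> = (\<Sum>a<card \<Omega>. \<Sum>\<tau>\<in>\<Omega>. ?y (e a) * ?y \<tau> * ?K (e a) \<tau>)"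
    by (intro sum.cong refl) (rule sum.reindex_bij_betw[OF bij])
  also have "\<dots> = kernel_form \<Omega> ?K ?y" unfolding kernel_form_def
    by (rule sum.reindex_bij_betw[OF bij, where g = "\<lambda>\<sigma>. \<Sum>\<tau>\<in>\<Omega>. ?y \<sigma> * ?y \<tau> * ?K \<sigma> \<tau>"])
  finally show ?thesis .
qed

lemma spectral_gap_trans_mat_mono:
  assumes card: "card \<Omega> \<ge> 2"
    and rev1: "\<And>\<sigma> \<tau>. \<sigma> \<in> \<Omega> \<Longrightarrow> \<tau> \<in> \<Omega> \<Longrightarrow> w \<sigma> * P1 \<sigma> \<tau> = w \<tau> * P1 \<tau> \<sigma>"
    and rev2: "\<And>\<sigma> \<tau>. \<sigma> \<in> \<Omega> \<Longrightarrow> \<tau> \<in> \<Omega> \<Longrightarrow> w \<sigma> * P2 \<sigma> \<tau> = w \<tau> * P2 \<tau> \<sigma>"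
    and psd: "\<And>x. kernel_form \<Omega> (\<lambda>\<sigma> \<tau>. w \<sigma> * P1 \<sigma> \<tau>) x \<ge> 0"
    and le: "\<And>x. kernel_form \<Omega> (\<lambda>\<sigma> \<tau>. w \<sigma> * P1 \<sigma> \<tau>) x \<le> kernel_form \<Omega> (\<lambda>\<sigma> \<tau>. w \<sigma> * P2 \<sigma> \<tau>) x"
  shows "spectral_gap (trans_mat \<Omega> P2) \<le> spectral_gap (trans_mat \<Omega> P1)"
proof -
  have "spectral_gap (sym_trans_mat \<Omega> w P2) \<le> spectral_gap (sym_trans_mat \<Omega> w P1)"
  proof (rule spectral_gap_mono[OF card])
    show "sym_trans_mat \<Omega> w P1 \<in> carrier_mat (card \<Omega>) (card \<Omega>)"
      and "sym_trans_mat \<Omega> w P2 \<in> carrier_mat (card \<Omega>) (card \<Omega>)"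
      by (simp_all add: sym_trans_mat_def)
    show "\<And>a b. a < card \<Omega> \<Longrightarrow> b < card \<Omega> \<Longrightarrow> sym_trans_mat \<Omega> w P1 $$ (a, b) = sym_trans_mat \<Omega> w P1 $$ (b, a)"
      by (rule sym_trans_mat_symmetric[OF rev1])
    show "\<And>a b. a < card \<Omega> \<Longrightarrow> b < card \<Omega> \<Longrightarrow> sym_trans_mat \<Omega> w P2 $$ (a, b) = sym_trans_mat \<Omega> w P2 $$ (b, a)"
      by (rule sym_trans_mat_symmetric[OF rev2])
    show "\<And>x. dot (card \<Omega>) x (matvec (card \<Omega>) (\<lambda>a b. sym_trans_mat \<Omega> w P1 $$ (a, b)) x) \<ge> 0"
      unfolding dot_sym_trans_mat by (rule psd)
    show "\<And>x. dot (card \<Omega>) x (matvec (card \<Omega>) (\<lambda>a b. sym_trans_mat \<Omega> w P1 $$ (a, b)) x)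
        \<le> dot (card \<Omega>) x (matvec (card \<Omega>) (\<lambda>a b. sym_trans_mat \<Omega> w P2 $$ (a, b)) x)"
      unfolding dot_sym_trans_mat by (rule le)
  qed
  then show ?thesis unfolding spectral_gap_sym_trans_mat .
qed

end

section \<open>Resampling kernels\<close>

abbreviation agree_off :: "int list set \<Rightarrow> int list set \<Rightarrow> (int list \<Rightarrow> nat) \<Rightarrow> (int list \<Rightarrow> nat) \<Rightarrow> bool" where
  "agree_off V U \<sigma> \<tau> \<equiv> (\<forall>v\<in>V - U. \<tau> v = \<sigma> v)"

lemma finite_configs: "finite V \<Longrightarrow> finite (configs V q)"
  unfolding configs_def by (rule finite_PiE) auto

lemma resample_commute:
  assumes "\<sigma> \<in> configs V q" "\<tau> \<in> configs V q"
  shows "resample V q U \<sigma> \<tau> = resample V q U \<tau> \<sigma>"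
  using assms unfolding resample_def by auto

lemma card_configs_agree_off:
  assumes V: "finite V" and U: "U \<subseteq> V" and \<sigma>: "\<sigma> \<in> configs V q"
  shows "card {\<tau> \<in> configs V q. agree_off V U \<sigma> \<tau>} = q ^ card U"
proof -
  let ?A = "{\<tau> \<in> configs V q. agree_off V U \<sigma> \<tau>}"
  have "bij_betw (\<lambda>\<tau>. restrict \<tau> U) ?A (U \<rightarrow>\<^sub>E {1..q})"
  proof (rule bij_betwI')
    fix x y assume x: "x \<in> ?A" and y: "y \<in> ?A"
    show "(restrict x U = restrict y U) = (x = y)"
    proof
      assume eq: "restrict x U = restrict y U"
      show "x = y"
      proof
        fix v
        show "x v = y v"
          using x y fun_cong[OF eq, of v] unfolding configs_def
          by (cases "v \<in> U"; cases "v \<in> V") (auto simp: PiE_def extensional_def)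
      qed
    qed simp
  next
    fix x assume "x \<in> ?A"
    then show "restrict x U \<in> U \<rightarrow>\<^sub>E {1..q}" using U unfolding configs_def by auto
  next
    fix f assume f: "f \<in> U \<rightarrow>\<^sub>E {1..q}"
    define \<tau> where "\<tau> = (\<lambda>v. if v \<in> U then f v else \<sigma> v)"
    have "\<tau> \<in> ?A" using f \<sigma> U unfolding \<tau>_def configs_def by (auto simp: PiE_def extensional_def Pi_def)
    moreover have "f = restrict \<tau> U" using f unfolding \<tau>_def by (auto simp: PiE_def extensional_def restrict_def)
    ultimately show "\<exists>x\<in>?A. f = restrict x U" by blast
  qed
  then have "card ?A = card (U \<rightarrow>\<^sub>E {1..q})" by (rule bij_betw_same_card)
  also have "\<dots> = q ^ card U" using finite_subset[OF U V] by (simp add: card_PiE)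
  finally show ?thesis .
qed

lemma resample_sum_eq_1:
  assumes V: "finite V" and U: "U \<subseteq> V" and \<sigma>: "\<sigma> \<in> configs V q" and q: "q \<ge> 1"
  shows "(\<Sum>\<tau>\<in>configs V q. resample V q U \<sigma> \<tau>) = 1"
proof -
  have "(\<Sum>\<tau>\<in>configs V q. resample V q U \<sigma> \<tau>)
      = (\<Sum>\<tau>\<in>{\<tau> \<in> configs V q. agree_off V U \<sigma> \<tau>}. 1 / real q ^ card U)"
    unfolding resample_def by (rule sum.mono_neutral_cong_right) (auto simp: finite_configs[OF V])
  also have "\<dots> = 1" using card_configs_agree_off[OF V U \<sigma>] q by simp
  finally show ?thesis .
qed

lemma agree_off_trans:
  assumes "U' \<subseteq> U" and "agree_off V U \<sigma> \<rho>" and "agree_off V U' \<rho> \<tau>"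
  shows "agree_off V U \<sigma> \<tau>"
proof
  fix v assume "v \<in> V - U"
  with assms show "\<tau> v = \<sigma> v" by (metis Diff_iff subsetD)
qed

lemma resample_resample:
  assumes V: "finite V" and U: "U \<subseteq> V" and U': "U' \<subseteq> U" and q: "q \<ge> 1"
    and \<sigma>: "\<sigma> \<in> configs V q" and \<tau>: "\<tau> \<in> configs V q"
  shows "(\<Sum>\<rho>\<in>configs V q. resample V q U \<sigma> \<rho> * resample V q U' \<rho> \<tau>) = resample V q U \<sigma> \<tau>"
proof (cases "agree_off V U \<sigma> \<tau>")
  case True
  have "resample V q U \<sigma> \<rho> * resample V q U' \<rho> \<tau> = resample V q U \<sigma> \<tau> * resample V q U' \<tau> \<rho>"
    if \<rho>: "\<rho> \<in> configs V q" for \<rho>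
  proof (cases "agree_off V U' \<rho> \<tau>")
    case agree': True
    then have "agree_off V U' \<tau> \<rho>" by auto
    with agree_off_trans[OF U' True] have "agree_off V U \<sigma> \<rho>" .
    then show ?thesis using True agree' \<rho> \<tau> unfolding resample_def by auto
  qed (auto simp: resample_def)
  then have "(\<Sum>\<rho>\<in>configs V q. resample V q U \<sigma> \<rho> * resample V q U' \<rho> \<tau>)
      = resample V q U \<sigma> \<tau> * (\<Sum>\<rho>\<in>configs V q. resample V q U' \<tau> \<rho>)"
    by (simp add: sum_distrib_left)
  also have "(\<Sum>\<rho>\<in>configs V q. resample V q U' \<tau> \<rho>) = 1"
    using U U' by (intro resample_sum_eq_1[OF V _ \<tau> q]) blast
  finally show ?thesis by simp
next
  case False
  have "resample V q U \<sigma> \<rho> * resample V q U' \<rho> \<tau> = 0" for \<rho>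
  proof (rule ccontr)
    assume "resample V q U \<sigma> \<rho> * resample V q U' \<rho> \<tau> \<noteq> 0"
    then have "agree_off V U \<sigma> \<rho>" "agree_off V U' \<rho> \<tau>"
      unfolding resample_def by (auto split: if_splits)
    then have "agree_off V U \<sigma> \<tau>" by (rule agree_off_trans[OF U'])
    with False show False by contradiction
  qed
  moreover have "resample V q U \<sigma> \<tau> = 0" using False unfolding resample_def by auto
  ultimately show ?thesis by simp
qed

definition resample_mean ::
    "int list set \<Rightarrow> nat \<Rightarrow> int list set \<Rightarrow> ((int list \<Rightarrow> nat) \<Rightarrow> real) \<Rightarrow> (int list \<Rightarrow> nat) \<Rightarrow> real" where
  "resample_mean V q U y \<sigma> = (\<Sum>\<tau>\<in>configs V q. resample V q U \<sigma> \<tau> * y \<tau>)"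

context
  fixes V :: "int list set" and q :: nat
  assumes V: "finite V" and q: "q \<ge> 1"
begin

lemma resample_mean_resample_mean:
  assumes U: "U \<subseteq> V" and U': "U' \<subseteq> U" and \<sigma>: "\<sigma> \<in> configs V q"
  shows "resample_mean V q U (resample_mean V q U' y) \<sigma> = resample_mean V q U y \<sigma>"
proof -
  let ?C = "configs V q"
  have "resample_mean V q U (resample_mean V q U' y) \<sigma>
      = (\<Sum>\<rho>\<in>?C. \<Sum>\<tau>\<in>?C. resample V q U \<sigma> \<tau> * resample V q U' \<tau> \<rho> * y \<rho>)"
    unfolding resample_mean_def by (subst sum.swap) (simp add: sum_distrib_left mult.assoc)
  also have "\<dots> = (\<Sum>\<rho>\<in>?C. resample V q U \<sigma> \<rho> * y \<rho>)"
    by (intro sum.cong refl)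
       (simp add: resample_resample[OF V U U' q \<sigma>] flip: sum_distrib_right)
  finally show ?thesis unfolding resample_mean_def .
qed

text \<open>A resampling kernel is an orthogonal projection.\<close>

lemma kernel_form_resample:
  assumes U: "U \<subseteq> V"
  shows "kernel_form (configs V q) (resample V q U) y = (\<Sum>\<sigma>\<in>configs V q. (resample_mean V q U y \<sigma>)\<^sup>2)"
proof -
  let ?C = "configs V q" and ?R = "resample V q U"
  have "(\<Sum>\<sigma>\<in>?C. (resample_mean V q U y \<sigma>)\<^sup>2) = (\<Sum>\<sigma>\<in>?C. \<Sum>\<tau>\<in>?C. \<Sum>\<rho>\<in>?C. y \<tau> * y \<rho> * (?R \<tau> \<sigma> * ?R \<sigma> \<rho>))"
    unfolding resample_mean_def power2_eq_square sum_product
    by (intro sum.cong refl) (simp add: resample_commute mult_ac)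
  also have "\<dots> = (\<Sum>\<tau>\<in>?C. \<Sum>\<rho>\<in>?C. \<Sum>\<sigma>\<in>?C. y \<tau> * y \<rho> * (?R \<tau> \<sigma> * ?R \<sigma> \<rho>))"
    by (subst sum.swap) (rule sum.cong[OF refl sum.swap])
  also have "\<dots> = (\<Sum>\<tau>\<in>?C. \<Sum>\<rho>\<in>?C. y \<tau> * y \<rho> * ?R \<tau> \<rho>)"
    by (intro sum.cong refl)
       (simp add: resample_resample[OF V U subset_refl q] flip: sum_distrib_left)
  finally show ?thesis unfolding kernel_form_def by simp
qed

lemma kernel_form_resample_le_sum_sq:
  assumes U: "U \<subseteq> V"
  shows "kernel_form (configs V q) (resample V q U) z \<le> (\<Sum>\<sigma>\<in>configs V q. (z \<sigma>)\<^sup>2)"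
proof -
  let ?C = "configs V q" and ?m = "resample_mean V q U z"
  have cross: "(\<Sum>\<sigma>\<in>?C. z \<sigma> * ?m \<sigma>) = kernel_form ?C (resample V q U) z"
    unfolding kernel_form_def resample_mean_def by (simp add: sum_distrib_left mult_ac)
  have "0 \<le> (\<Sum>\<sigma>\<in>?C. (z \<sigma> - ?m \<sigma>)\<^sup>2)" by (rule sum_nonneg) simp
  also have "\<dots> = (\<Sum>\<sigma>\<in>?C. (z \<sigma>)\<^sup>2) - 2 * (\<Sum>\<sigma>\<in>?C. z \<sigma> * ?m \<sigma>) + (\<Sum>\<sigma>\<in>?C. (?m \<sigma>)\<^sup>2)"
    by (simp add: power2_diff sum.distrib sum_subtractf sum_distrib_left mult.assoc)
  finally show ?thesis unfolding cross kernel_form_resample[OF U, symmetric] by simp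
qed

lemma kernel_form_resample_antimono:
  assumes U: "U \<subseteq> V" and U': "U' \<subseteq> U"
  shows "kernel_form (configs V q) (resample V q U) y \<le> kernel_form (configs V q) (resample V q U') y"
proof -
  let ?m = "resample_mean V q U'"
  have "kernel_form (configs V q) (resample V q U) y = (\<Sum>\<sigma>\<in>configs V q. (resample_mean V q U (?m y) \<sigma>)\<^sup>2)"
    unfolding kernel_form_resample[OF U]
    by (intro sum.cong refl) (simp add: resample_mean_resample_mean[OF U U'])
  also have "\<dots> = kernel_form (configs V q) (resample V q U) (?m y)"
    by (rule kernel_form_resample[OF U, symmetric])
  also have "\<dots> \<le> (\<Sum>\<sigma>\<in>configs V q. (?m y \<sigma>)\<^sup>2)" by (rule kernel_form_resample_le_sum_sq[OF U])
  also have "\<dots> = kernel_form (configs V q) (resample V q U') y"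
    using U U' by (intro kernel_form_resample[symmetric]) blast
  finally show ?thesis .
qed

end

section \<open>The Edwards--Sokal representation\<close>

definition potts_weight :: "real \<Rightarrow> int list set \<Rightarrow> (int list \<Rightarrow> nat) \<Rightarrow> real" where
  "potts_weight \<beta> V \<sigma> = exp (\<beta> * real (card (mono_edges V \<sigma>)))"

definition compatible :: "int list set \<Rightarrow> int list set set \<Rightarrow> (int list \<Rightarrow> nat) \<Rightarrow> real" where
  "compatible V A \<sigma> = (if A \<subseteq> mono_edges V \<sigma> then 1 else 0)"

text \<open>
  The joint bond--spin kernel: \<open>U A\<close> is the set of vertices resampled given the bond set \<open>A\<close>.
\<close>

definition es_kernel ::
    "real \<Rightarrow> nat \<Rightarrow> int list set \<Rightarrow> (int list set set \<Rightarrow> int list set) \<Rightarrow> (int list \<Rightarrow> nat) \<Rightarrow> (int list \<Rightarrow> nat) \<Rightarrow> real" where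
  "es_kernel \<beta> q V U \<sigma> \<tau> =
     (\<Sum>A\<in>Pow (edges V). (exp \<beta> - 1) ^ card A * (compatible V A \<sigma> * compatible V A \<tau>) * resample V q (U A) \<sigma> \<tau>)"

lemma finite_edges: "finite V \<Longrightarrow> finite (edges V)"
  by (rule finite_subset[of _ "Pow V"]) (auto simp: edges_def)

lemma finite_mono_edges: "finite V \<Longrightarrow> finite (mono_edges V \<sigma>)"
  using finite_edges unfolding mono_edges_def by auto

lemma exp_mult_perc:
  assumes E: "finite E" and A: "A \<subseteq> E"
  shows "exp (\<beta> * real (card E)) * perc (1 - exp (-\<beta>)) E A = (exp \<beta> - 1) ^ card A"
proof -
  have cA: "card A \<le> card E" using card_mono[OF E A] .
  have "exp (-\<beta>) ^ (card E - card A) = exp (real (card E - card A) * (-\<beta>))"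
    by (rule exp_of_nat_mult[symmetric])
  then have "exp (\<beta> * real (card E)) * exp (-\<beta>) ^ (card E - card A)
      = exp (\<beta> * real (card E) + real (card E - card A) * (-\<beta>))"
    by (simp add: exp_add[symmetric])
  also have "\<beta> * real (card E) + real (card E - card A) * (-\<beta>) = real (card A) * \<beta>"
    using cA by (simp add: of_nat_diff algebra_simps)
  also have "exp (real (card A) * \<beta>) = exp \<beta> ^ card A" by (rule exp_of_nat_mult)
  finally have key: "exp (\<beta> * real (card E)) * exp (-\<beta>) ^ (card E - card A) = exp \<beta> ^ card A" .
  have "exp (\<beta> * real (card E)) * perc (1 - exp (-\<beta>)) E A
      = (1 - exp (-\<beta>)) ^ card A * (exp (\<beta> * real (card E)) * exp (-\<beta>) ^ (card E - card A))"
    unfolding perc_def by (simp add: mult_ac)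
  also have "\<dots> = ((1 - exp (-\<beta>)) * exp \<beta>) ^ card A" unfolding key by (simp add: power_mult_distrib)
  also have "(1 - exp (-\<beta>)) * exp \<beta> = exp \<beta> - 1" by (simp add: exp_minus field_simps)
  finally show ?thesis .
qed

lemma resample_preserves_mono_edges:
  assumes A: "A \<subseteq> mono_edges V \<sigma>" and U: "U \<subseteq> isolated V A" and R: "resample V q U \<sigma> \<tau> \<noteq> 0"
  shows "A \<subseteq> mono_edges V \<tau>"
proof
  fix e assume e: "e \<in> A"
  from R have agree: "agree_off V U \<sigma> \<tau>" unfolding resample_def by (auto split: if_splits)
  from e A obtain u v where e_edge: "e \<in> edges V" and uv: "e = {u, v}" "\<sigma> u = \<sigma> v"
    unfolding mono_edges_def by auto
  have "e \<subseteq> V" using e_edge unfolding edges_def by auto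
  moreover have "x \<notin> U" if "x \<in> e" for x using U e that unfolding isolated_def by auto
  ultimately have "u \<in> V - U" "v \<in> V - U" using uv by auto
  then have "\<tau> u = \<tau> v" using agree uv by simp
  then show "e \<in> mono_edges V \<tau>" unfolding mono_edges_def using e_edge uv by blast
qed

lemma potts_weight_mult_kernel:
  assumes V: "finite V" and U: "\<And>A. U A \<subseteq> isolated V A"
  shows "potts_weight \<beta> V \<sigma> *
      (\<Sum>A\<in>Pow (mono_edges V \<sigma>). perc (1 - exp (-\<beta>)) (mono_edges V \<sigma>) A * resample V q (U A) \<sigma> \<tau>)
    = es_kernel \<beta> q V U \<sigma> \<tau>"
proof -
  let ?E = "mono_edges V \<sigma>"
  have "potts_weight \<beta> V \<sigma> * (\<Sum>A\<in>Pow ?E. perc (1 - exp (-\<beta>)) ?E A * resample V q (U A) \<sigma> \<tau>)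
      = (\<Sum>A\<in>Pow ?E. (exp \<beta> - 1) ^ card A * resample V q (U A) \<sigma> \<tau>)"
    unfolding potts_weight_def sum_distrib_left
    by (intro sum.cong refl) (simp add: mult.assoc[symmetric] exp_mult_perc[OF finite_mono_edges[OF V]])
  also have "\<dots> = es_kernel \<beta> q V U \<sigma> \<tau>"
    unfolding es_kernel_def
  proof (rule sum.mono_neutral_cong_left)
    show "finite (Pow (edges V))" using finite_edges[OF V] by simp
    show "Pow ?E \<subseteq> Pow (edges V)" unfolding mono_edges_def by auto
    show "\<forall>A\<in>Pow (edges V) - Pow ?E.
        (exp \<beta> - 1) ^ card A * (compatible V A \<sigma> * compatible V A \<tau>) * resample V q (U A) \<sigma> \<tau> = 0"
      unfolding compatible_def by auto
    show "(exp \<beta> - 1) ^ card A * resample V q (U A) \<sigma> \<tau>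
        = (exp \<beta> - 1) ^ card A * (compatible V A \<sigma> * compatible V A \<tau>) * resample V q (U A) \<sigma> \<tau>"
      if A: "A \<in> Pow ?E" for A
      using A resample_preserves_mono_edges[of A V \<sigma> "U A" q \<tau>] U unfolding compatible_def by auto
  qed
  finally show ?thesis .
qed

lemma es_kernel_commute:
  assumes "\<sigma> \<in> configs V q" "\<tau> \<in> configs V q"
  shows "es_kernel \<beta> q V U \<sigma> \<tau> = es_kernel \<beta> q V U \<tau> \<sigma>"
  unfolding es_kernel_def by (intro sum.cong refl) (simp add: resample_commute[OF assms] mult_ac)

lemma kernel_form_es_kernel:
  "kernel_form (configs V q) (es_kernel \<beta> q V U) x
     = (\<Sum>A\<in>Pow (edges V). (exp \<beta> - 1) ^ card A *
          kernel_form (configs V q) (resample V q (U A)) (\<lambda>\<sigma>. x \<sigma> * compatible V A \<sigma>))"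
proof -
  let ?C = "configs V q"
  have "kernel_form ?C (es_kernel \<beta> q V U) x
      = (\<Sum>\<sigma>\<in>?C. \<Sum>\<tau>\<in>?C. \<Sum>A\<in>Pow (edges V). (exp \<beta> - 1) ^ card A *
          ((x \<sigma> * compatible V A \<sigma>) * (x \<tau> * compatible V A \<tau>) * resample V q (U A) \<sigma> \<tau>))"
    unfolding kernel_form_def es_kernel_def by (simp add: sum_distrib_left mult_ac)
  also have "\<dots> = (\<Sum>A\<in>Pow (edges V). \<Sum>\<sigma>\<in>?C. \<Sum>\<tau>\<in>?C. (exp \<beta> - 1) ^ card A *
          ((x \<sigma> * compatible V A \<sigma>) * (x \<tau> * compatible V A \<tau>) * resample V q (U A) \<sigma> \<tau>))"
    by (subst sum.cong[OF refl sum.swap]) (rule sum.swap)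
  finally show ?thesis unfolding kernel_form_def by (simp add: sum_distrib_left)
qed

context
  fixes V :: "int list set" and q :: nat and \<beta> :: real
  assumes V: "finite V" and q: "q \<ge> 1" and \<beta>: "\<beta> \<ge> 0"
begin

lemma kernel_form_es_kernel_nonneg:
  assumes "\<And>A. U A \<subseteq> V"
  shows "kernel_form (configs V q) (es_kernel \<beta> q V U) x \<ge> 0"
  unfolding kernel_form_es_kernel kernel_form_resample[OF V q assms]
  using \<beta> by (intro sum_nonneg mult_nonneg_nonneg) (auto intro!: zero_le_power)

lemma kernel_form_es_kernel_antimono:
  assumes "\<And>A. U A \<subseteq> V" and "\<And>A. U' A \<subseteq> U A"
  shows "kernel_form (configs V q) (es_kernel \<beta> q V U) x \<le> kernel_form (configs V q) (es_kernel \<beta> q V U') x"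
  unfolding kernel_form_es_kernel
  using \<beta> by (intro sum_mono mult_left_mono kernel_form_resample_antimono[OF V q assms]) auto

end

section \<open>The two dynamics\<close>

lemma isolated_subset: "isolated V A \<subseteq> V"
  unfolding isolated_def by auto

lemma weighted_P_SW:
  assumes "finite V"
  shows "potts_weight \<beta> V \<sigma> * P_SW \<beta> q V \<sigma> \<tau> = es_kernel \<beta> q V (isolated V) \<sigma> \<tau>"
  unfolding P_SW_def by (rule potts_weight_mult_kernel[OF assms subset_refl])

lemma weighted_P_D:
  assumes "finite V"
  shows "potts_weight \<beta> V \<sigma> * P_D \<beta> q d L V \<sigma> \<tau>
    = 1 / real (card (tile_index d L)) *
      (\<Sum>x\<in>tile_index d L. es_kernel \<beta> q V (\<lambda>A. isolated V A \<inter> (tile d L x \<inter> V)) \<sigma> \<tau>)"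
  unfolding P_D_def
  by (simp add: potts_weight_mult_kernel[OF assms, symmetric] sum_distrib_left mult_ac)

lemma kernel_form_P_SW_le_P_D:
  assumes V: "finite V" and q: "q \<ge> 1" and \<beta>: "\<beta> \<ge> 0" and T: "tile_index d L \<noteq> {}" "finite (tile_index d L)"
  shows "kernel_form (configs V q) (\<lambda>\<sigma> \<tau>. potts_weight \<beta> V \<sigma> * P_SW \<beta> q V \<sigma> \<tau>) x
       \<le> kernel_form (configs V q) (\<lambda>\<sigma> \<tau>. potts_weight \<beta> V \<sigma> * P_D \<beta> q d L V \<sigma> \<tau>) x"
proof -
  let ?T = "tile_index d L" and ?form = "\<lambda>U. kernel_form (configs V q) (es_kernel \<beta> q V U) x"
  have "?form (isolated V) = 1 / real (card ?T) * (\<Sum>y\<in>?T. ?form (isolated V))"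
    using T by simp
  also have "\<dots> \<le> 1 / real (card ?T) * (\<Sum>y\<in>?T. ?form (\<lambda>A. isolated V A \<inter> (tile d L y \<inter> V)))"
    by (intro mult_left_mono sum_mono kernel_form_es_kernel_antimono[OF V q \<beta>]) (auto simp: isolated_subset)
  finally show ?thesis
    unfolding weighted_P_SW[OF V] weighted_P_D[OF V] kernel_form_average .
qed

lemma finite_cube: "finite (cube d c n)"
proof (rule finite_subset)
  let ?S = "\<Union>i<d. {c ! i..<c ! i + int n}"
  show "cube d c n \<subseteq> {xs. set xs \<subseteq> ?S \<and> length xs = d}"
  proof
    fix x assume x: "x \<in> cube d c n"
    have "set x \<subseteq> ?S"
    proof
      fix y assume "y \<in> set x"
      then obtain i where "i < length x" "y = x ! i" by (auto simp: in_set_conv_nth)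
      then show "y \<in> ?S" using x unfolding cube_def by auto
    qed
    then show "x \<in> {xs. set xs \<subseteq> ?S \<and> length xs = d}" using x unfolding cube_def by auto
  qed
qed (rule finite_lists_length_eq, simp)

lemma finite_tile_index: "finite (tile_index d L)"
proof (rule finite_subset)
  show "tile_index d L \<subseteq> {xs. set xs \<subseteq> {0..int L + 2} \<and> length xs = d}"
  proof
    fix x assume x: "x \<in> tile_index d L"
    have "set x \<subseteq> {0..int L + 2}"
    proof
      fix y assume "y \<in> set x"
      then obtain i where "i < length x" "y = x ! i" by (auto simp: in_set_conv_nth)
      then show "y \<in> {0..int L + 2}" using x unfolding tile_index_def by auto
    qed
    then show "x \<in> {xs. set xs \<subseteq> {0..int L + 2} \<and> length xs = d}" using x unfolding tile_index_def by auto
  qed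
qed (rule finite_lists_length_eq, simp)

lemma tile_index_nonempty: "tile_index d L \<noteq> {}"
proof -
  have "replicate d 0 \<in> tile_index d L" unfolding tile_index_def by auto
  then show ?thesis by blast
qed

lemma two_le_card_configs:
  assumes "finite V" and "V \<noteq> {}" and "q \<ge> 2"
  shows "2 \<le> card (configs V q)"
proof -
  have "card V \<ge> 1" using assms by (simp add: Suc_leI card_gt_0_iff)
  then have "q ^ 1 \<le> q ^ card V" using assms(3) by (intro power_increasing) auto
  then show ?thesis using assms unfolding configs_def by (simp add: card_PiE)
qed

theorem mainTheorem9:
  fixes q d L n :: nat and \<beta> :: real and c :: "int list"
  assumes "q \<ge> 2" and "\<beta> > 0" and "odd L"
    and "d \<ge> 1" and "length c = d" and "n \<ge> 1"
  shows "spectral_gap (trans_mat (configs (cube d c n) q) (P_SW \<beta> q (cube d c n)))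
         \<ge> spectral_gap (trans_mat (configs (cube d c n) q) (P_D \<beta> q d L (cube d c n)))"
proof -
  let ?V = "cube d c n"
  have V: "finite ?V" by (rule finite_cube)
  have "c \<in> ?V" using assms(5,6) unfolding cube_def by auto
  have q: "q \<ge> 1" and \<beta>: "\<beta> \<ge> 0" using assms(1,2) by auto
  show ?thesis
  proof (rule spectral_gap_trans_mat_mono[where w = "potts_weight \<beta> ?V"])
    show "finite (configs ?V q)" by (rule finite_configs[OF V])
    show "card (configs ?V q) \<ge> 2" using \<open>c \<in> ?V\<close> by (intro two_le_card_configs[OF V _ assms(1)]) auto
    show "\<And>\<sigma>. potts_weight \<beta> ?V \<sigma> > 0" by (simp add: potts_weight_def)
    show "\<And>\<sigma> \<tau>. \<sigma> \<in> configs ?V q \<Longrightarrow> \<tau> \<in> configs ?V q \<Longrightarrow>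
        potts_weight \<beta> ?V \<sigma> * P_SW \<beta> q ?V \<sigma> \<tau> = potts_weight \<beta> ?V \<tau> * P_SW \<beta> q ?V \<tau> \<sigma>"
      by (simp add: weighted_P_SW[OF V] es_kernel_commute)
    show "\<And>\<sigma> \<tau>. \<sigma> \<in> configs ?V q \<Longrightarrow> \<tau> \<in> configs ?V q \<Longrightarrow>
        potts_weight \<beta> ?V \<sigma> * P_D \<beta> q d L ?V \<sigma> \<tau> = potts_weight \<beta> ?V \<tau> * P_D \<beta> q d L ?V \<tau> \<sigma>"
      by (simp add: weighted_P_D[OF V] es_kernel_commute)
    show "\<And>x. kernel_form (configs ?V q) (\<lambda>\<sigma> \<tau>. potts_weight \<beta> ?V \<sigma> * P_SW \<beta> q ?V \<sigma> \<tau>) x \<ge> 0"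
      unfolding weighted_P_SW[OF V] by (rule kernel_form_es_kernel_nonneg[OF V q \<beta> isolated_subset])
    show "\<And>x. kernel_form (configs ?V q) (\<lambda>\<sigma> \<tau>. potts_weight \<beta> ?V \<sigma> * P_SW \<beta> q ?V \<sigma> \<tau>) x
        \<le> kernel_form (configs ?V q) (\<lambda>\<sigma> \<tau>. potts_weight \<beta> ?V \<sigma> * P_D \<beta> q d L ?V \<sigma> \<tau>) x"
      by (rule kernel_form_P_SW_le_P_D[OF V q \<beta> tile_index_nonempty finite_tile_index])
  qed
qed

end
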